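(* Let $X$ be a finite set with $|X|\geq 2$, put $p=2|X|-1$, and let $y$ be the exponential growth rate of the free inverse monoid $\mathrm{FIM}(X)$. Then $y$ is the largest real root of the polynomial equation \[p^p y^{p-2}-(py-1)^{p-1}=0,\] and $y\in(p,p+1)$. In particular, $y$ is an algebraic number.
   Context: $\mathrm{FIM}(X)$ is the free inverse monoid on $X$, generated as a monoid by $X\cup X^{-1}$, where $X^{-1}$ is a disjoint copy of $X$. The length of an element is the minimal length of a word over $X\cup X^{-1}$ representing it. $S(K)$ is the set of elements of length exactly $K$. The exponential growth rate is $\limsup_{K\to\infty}|S(K)|^{1/K}$. *)

theory Defs
  imports Complex_Main "HOL-Library.Extended_Real" "HOL-Library.Liminf_Limsup" "HOL-Computational_Algebra.Polynomial"
begin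

text \<open>Letters of the alphabet X \<union> X^{-1}: (x, True) stands for x, (x, False) for its
  formal inverse x^{-1}. Words are lists of letters.\<close>

type_synonym 'a fim_word = "('a \<times> bool) list"

definition fim_words :: "'a set \<Rightarrow> 'a fim_word set" where
  "fim_words X = lists (X \<times> UNIV)"

definition winv :: "'a fim_word \<Rightarrow> 'a fim_word" where
  "winv w = rev (map (\<lambda>(x, b). (x, \<not> b)) w)"

inductive wag :: "'a fim_word \<Rightarrow> 'a fim_word \<Rightarrow> bool" where
  wag_refl: "wag w w"
| wag_sym: "wag w v \<Longrightarrow> wag v w"
| wag_trans: "wag u v \<Longrightarrow> wag v w \<Longrightarrow> wag u w"
| wag_ctx: "wag w v \<Longrightarrow> wag (l @ w @ r) (l @ v @ r)"
| wag_ax1: "wag (w @ winv w @ w) w"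
| wag_ax2: "wag (w @ winv w @ v @ winv v) (v @ winv v @ w @ winv w)"

definition fim_elem :: "'a set \<Rightarrow> 'a fim_word \<Rightarrow> 'a fim_word set" where
  "fim_elem X w = {v \<in> fim_words X. wag w v}"

definition FIM :: "'a set \<Rightarrow> 'a fim_word set set" where
  "FIM X = fim_elem X ` fim_words X"

definition fim_length :: "'a fim_word set \<Rightarrow> nat" where
  "fim_length e = (LEAST n. \<exists>v\<in>e. length v = n)"

definition fim_sphere :: "'a set \<Rightarrow> nat \<Rightarrow> 'a fim_word set set" where
  "fim_sphere X K = {e \<in> FIM X. fim_length e = K}"

definition fim_growth_rate :: "'a set \<Rightarrow> ereal" where
  "fim_growth_rate X = limsup (\<lambda>K. ereal (real (card (fim_sphere X K)) powr (1 / real K)))"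

end

theory Submission
  imports Defs "HOL-Library.FuncSet" "HOL-Library.Sublist" "HOL-Analysis.Summation_Tests"
begin

text \<open>By Munn's theorem an element of FIM(X) is determined by the finite subtree V of the Cayley
  tree of the free group traced by any representing word, together with the endpoint g of the
  trace; a shortest representative crosses every edge of V twice except those on the geodesic to
  g, so the length is 2 (|V| - 1) - |g|. Weighting a marked tree by t^length and letting the depth
  grow, the sphere series is the limit of generating functions obeying a branching recursion in
  which every non-root vertex has p children: with x = t^2,
  a_(m+1) = (1 + x a_m)^p and b_(m+1) = a_(m+1) + p t (1 + x a_m)^(p-1) b_m.
  For t < 1/y the a_m stay below the fixpoint U = p y / (p y - 1), so the multiplier of the
  b-recursion is at most t y < 1 and the b_m stay bounded. For 1/y < t \<le> 1/p the a_m either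
  diverge or converge to a fixpoint at which the multiplier of the b-recursion exceeds 1; either
  way b_m is unbounded. So the radius of convergence of the sphere series is 1/y, and y is the
  growth rate.\<close>

section \<open>Munn trees\<close>

text \<open>A vertex of the Cayley tree of the free group on X is a reduced word, stored reversed so
  that moving along a letter is a cons or a cancellation at the head of the list.\<close>

definition letter_inv :: "'a \<times> bool \<Rightarrow> 'a \<times> bool" where
  "letter_inv = (\<lambda>(x, b). (x, \<not> b))"

lemma letter_inv_letter_inv [simp]: "letter_inv (letter_inv a) = a"
  by (cases a) (simp add: letter_inv_def)

lemma letter_inv_alphabet: "letter_inv ` (X \<times> UNIV) \<subseteq> X \<times> UNIV"
  by (auto simp: letter_inv_def)

lemma winv_conv_letter_inv: "winv w = rev (map letter_inv w)"
  unfolding winv_def letter_inv_def by simp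

lemma winv_winv [simp]: "winv (winv w) = w"
  by (simp add: winv_conv_letter_inv rev_map comp_def)

lemma winv_append [simp]: "winv (u @ v) = winv v @ winv u"
  by (simp add: winv_conv_letter_inv)

fun reduced :: "'a fim_word \<Rightarrow> bool" where
  "reduced (a # b # l) \<longleftrightarrow> b \<noteq> letter_inv a \<and> reduced (b # l)"
| "reduced _ \<longleftrightarrow> True"

lemma reduced_Cons_iff: "reduced (a # l) \<longleftrightarrow> reduced l \<and> (l = [] \<or> hd l \<noteq> letter_inv a)"
  by (cases l) auto

lemma reduced_tl: "reduced r \<Longrightarrow> reduced (tl r)"
  by (cases r rule: reduced.cases) auto

lemma reduced_appendD: "reduced (xs @ ys) \<Longrightarrow> reduced xs \<and> reduced ys"
  by (induction xs) (auto simp: reduced_Cons_iff)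

lemma reduced_join: "reduced (xs @ [d]) \<Longrightarrow> reduced (d # ys) \<Longrightarrow> reduced (xs @ d # ys)"
proof (induction xs)
  case (Cons a xs)
  then show ?case by (cases xs) (auto simp: reduced_Cons_iff)
qed simp

definition fg_step :: "'a fim_word \<Rightarrow> 'a \<times> bool \<Rightarrow> 'a fim_word" where
  "fg_step r a = (case r of [] \<Rightarrow> [a] | b # r' \<Rightarrow> if b = letter_inv a then r' else a # r)"

lemma reduced_fg_step: "reduced r \<Longrightarrow> reduced (fg_step r a)"
  by (cases r) (auto simp: fg_step_def dest: reduced_tl)

lemma fg_step_cancel: "reduced r \<Longrightarrow> fg_step (fg_step r a) (letter_inv a) = r"
  by (cases r rule: reduced.cases) (auto simp: fg_step_def)

lemma fg_step_push: "r = [] \<or> hd r \<noteq> letter_inv a \<Longrightarrow> fg_step r a = a # r"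
  by (cases r) (auto simp: fg_step_def)

lemma set_fg_step: "set (fg_step r a) \<subseteq> insert a (set r)"
  by (cases r) (auto simp: fg_step_def)

definition fg_end :: "'a fim_word \<Rightarrow> 'a fim_word \<Rightarrow> 'a fim_word" where
  "fg_end r w = foldl fg_step r w"

fun munn_tree :: "'a fim_word \<Rightarrow> 'a fim_word \<Rightarrow> 'a fim_word set" where
  "munn_tree r [] = {r}"
| "munn_tree r (a # w) = insert r (munn_tree (fg_step r a) w)"

lemma fg_end_simps [simp]:
  "fg_end r [] = r" "fg_end r (a # w) = fg_end (fg_step r a) w"
  "fg_end r (u @ v) = fg_end (fg_end r u) v"
  by (simp_all add: fg_end_def)

lemma reduced_fg_end: "reduced r \<Longrightarrow> reduced (fg_end r w)"
  by (induction w arbitrary: r) (auto simp: reduced_fg_step)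

lemma finite_munn_tree [simp]: "finite (munn_tree r w)"
  by (induction w arbitrary: r) auto

lemma start_in_munn_tree: "r \<in> munn_tree r w"
  by (cases w) auto

lemma fg_end_in_munn_tree: "fg_end r w \<in> munn_tree r w"
  by (induction w arbitrary: r) auto

lemma munn_tree_append: "munn_tree r (u @ v) = munn_tree r u \<union> munn_tree (fg_end r u) v"
  by (induction u arbitrary: r) (auto simp: start_in_munn_tree)

lemma munn_tree_snoc: "munn_tree r (u @ [a]) = insert (fg_end r (u @ [a])) (munn_tree r u)"
  by (auto simp: munn_tree_append fg_end_in_munn_tree)

lemma reduced_munn_tree: "reduced r \<Longrightarrow> v \<in> munn_tree r w \<Longrightarrow> reduced v"
  by (induction w arbitrary: r) (auto dest: reduced_fg_step)

lemma set_munn_tree: "v \<in> munn_tree r w \<Longrightarrow> set v \<subseteq> set r \<union> set w"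
  by (induction w arbitrary: r) (auto dest!: subsetD[OF set_fg_step])

lemma munn_tree_fg_end_take: "v \<in> munn_tree r w \<Longrightarrow> \<exists>i\<le>length w. fg_end r (take i w) = v"
proof (induction w arbitrary: r)
  case (Cons a w)
  show ?case
  proof (cases "v = r")
    case False
    then obtain i where "i \<le> length w" "fg_end (fg_step r a) (take i w) = v" using Cons by auto
    then show ?thesis by (intro exI[of _ "Suc i"]) simp
  qed (auto intro: exI[of _ 0])
qed simp

lemma munn_tree_tl_closed: "v \<in> munn_tree [] w \<Longrightarrow> tl v \<in> munn_tree [] w"
proof (induction w arbitrary: v rule: rev_induct)
  case (snoc a w)
  let ?g = "fg_end [] w"
  show ?case
  proof (cases "v \<in> munn_tree [] w")
    case False
    then have v: "v = fg_step ?g a" using snoc.prems by (simp add: munn_tree_snoc)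
    show ?thesis
    proof (cases ?g)
      case (Cons b g')
      have "g' \<in> munn_tree [] w" using snoc.IH[OF fg_end_in_munn_tree] Cons by simp
      then show ?thesis
        using v Cons snoc.IH[of g'] fg_end_in_munn_tree[of "[]" w] by (auto simp: fg_step_def munn_tree_snoc split: if_splits)
    qed (use v in \<open>simp add: fg_step_def munn_tree_snoc start_in_munn_tree\<close>)
  qed (simp add: snoc.IH munn_tree_snoc)
qed simp

lemma munn_tree_winv:
  assumes "reduced r"
  shows "fg_end (fg_end r w) (winv w) = r" and "munn_tree (fg_end r w) (winv w) = munn_tree r w"
proof -
  have "fg_end (fg_end r w) (winv w) = r \<and> munn_tree (fg_end r w) (winv w) = munn_tree r w"
  proof (induction w rule: rev_induct)
    case (snoc a w)
    have "fg_step (fg_end r (w @ [a])) (letter_inv a) = fg_end r w"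
      using assms by (simp add: fg_step_cancel reduced_fg_end)
    with snoc.IH show ?case by (simp add: winv_conv_letter_inv munn_tree_snoc)
  qed (simp add: winv_conv_letter_inv)
  then show "fg_end (fg_end r w) (winv w) = r" "munn_tree (fg_end r w) (winv w) = munn_tree r w"
    by simp_all
qed

lemma wag_munn_invariant:
  "wag w v \<Longrightarrow> reduced r \<Longrightarrow> munn_tree r w = munn_tree r v \<and> fg_end r w = fg_end r v"
proof (induction arbitrary: r rule: wag.induct)
  case (wag_ctx w v l r')
  then have "reduced (fg_end r l)" by (simp add: reduced_fg_end)
  with wag_ctx show ?case by (simp add: munn_tree_append)
next
  case (wag_ax1 w)
  have "reduced (fg_end r w)" by (simp add: reduced_fg_end wag_ax1)
  with munn_tree_winv[OF wag_ax1] show ?case by (auto simp: munn_tree_append)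
next
  case (wag_ax2 w v)
  with munn_tree_winv[OF wag_ax2] show ?case by (auto simp: munn_tree_append)
qed auto

text \<open>Completeness: every word is congruent to a product of idempotents u u^{-1}, one for each
  vertex u of its Munn tree, followed by the reduced word of its endpoint.\<close>

declare wag_trans [trans]

lemma wag_cong: "wag a b \<Longrightarrow> wag c d \<Longrightarrow> wag (a @ c) (b @ d)"
  using wag_ctx[of a b "[]" c] wag_ctx[of c d b "[]"] by (auto intro: wag_trans)

lemma wag_congL: "wag c d \<Longrightarrow> wag (a @ c) (a @ d)"
  by (rule wag_cong[OF wag_refl])

lemma wag_congR: "wag a b \<Longrightarrow> wag (a @ c) (b @ c)"
  by (rule wag_cong[OF _ wag_refl])

definition idem :: "'a fim_word \<Rightarrow> 'a fim_word" where
  "idem u = u @ winv u"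

definition idem_prod :: "'a fim_word list \<Rightarrow> 'a fim_word" where
  "idem_prod xs = concat (map (\<lambda>v. idem (rev v)) xs)"

lemma idem_prod_simps [simp]:
  "idem_prod [] = []" "idem_prod (x # xs) = idem (rev x) @ idem_prod xs"
  "idem_prod (xs @ ys) = idem_prod xs @ idem_prod ys"
  by (simp_all add: idem_prod_def)

lemma idem_absorb: "wag (idem u @ idem u @ c) (idem u @ c)"
  using wag_congR[OF wag_ax1[of u], of "winv u @ c"] by (simp add: idem_def)

lemma idem_commute: "wag (idem u @ idem v @ c) (idem v @ idem u @ c)"
  using wag_congR[OF wag_ax2[of u v], of c] by (simp add: idem_def)

lemma idem_prod_removeAll:
  "x \<in> set xs \<Longrightarrow> wag (idem_prod xs) (idem (rev x) @ idem_prod (removeAll x xs))"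
proof (induction xs)
  case (Cons y ys)
  let ?E = "idem (rev x)" and ?R = "idem_prod (removeAll x ys)"
  show ?case
  proof (cases "y = x")
    case True
    show ?thesis
    proof (cases "x \<in> set ys")
      case True
      have "wag (?E @ idem_prod ys) (?E @ ?E @ ?R)" by (rule wag_congL) (rule Cons.IH[OF True])
      also have "wag \<dots> (?E @ ?R)" by (rule idem_absorb)
      finally show ?thesis using \<open>y = x\<close> by simp
    qed (use \<open>y = x\<close> in \<open>simp add: wag_refl\<close>)
  next
    case False
    with Cons.prems have "x \<in> set ys" by auto
    have "wag (idem (rev y) @ idem_prod ys) (idem (rev y) @ ?E @ ?R)"
      by (rule wag_congL) (rule Cons.IH[OF \<open>x \<in> set ys\<close>])
    also have "wag \<dots> (?E @ idem (rev y) @ ?R)" by (rule idem_commute)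
    finally show ?thesis using False by simp
  qed
qed simp

lemma idem_prod_distinct: "distinct zs \<Longrightarrow> set xs = set zs \<Longrightarrow> wag (idem_prod xs) (idem_prod zs)"
proof (induction zs arbitrary: xs)
  case (Cons z zs)
  then have "z \<in> set xs" and "set (removeAll z xs) = set zs" by auto
  have "wag (idem_prod xs) (idem (rev z) @ idem_prod (removeAll z xs))"
    by (rule idem_prod_removeAll) fact
  also have "wag \<dots> (idem_prod (z # zs))"
    using Cons.IH[OF _ \<open>set (removeAll z xs) = set zs\<close>] Cons.prems by (simp add: wag_congL)
  finally show ?case .
qed (simp add: wag_refl)

lemma idem_prod_set: "set xs = set ys \<Longrightarrow> wag (idem_prod xs) (idem_prod ys)"
  using idem_prod_distinct[of "remdups xs" xs] idem_prod_distinct[of "remdups xs" ys]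
  by (auto intro: wag_trans wag_sym)

lemma idem_idem_prod_commute: "wag (idem u @ idem_prod xs @ c) (idem_prod xs @ idem u @ c)"
proof (induction xs arbitrary: c)
  case (Cons x xs)
  have "wag (idem u @ idem (rev x) @ idem_prod xs @ c) (idem (rev x) @ idem u @ idem_prod xs @ c)"
    by (rule idem_commute)
  also have "wag \<dots> (idem (rev x) @ idem_prod xs @ idem u @ c)"
    by (rule wag_congL) (rule Cons.IH)
  finally show ?case by simp
qed (simp add: wag_refl)

lemma idem_prod_absorb: "x \<in> set xs \<Longrightarrow> wag (idem_prod xs @ idem (rev x) @ c) (idem_prod xs @ c)"
proof -
  assume x: "x \<in> set xs"
  let ?E = "idem (rev x)" and ?R = "idem_prod (removeAll x xs)"
  have "wag (idem_prod xs @ ?E @ c) (?E @ idem_prod xs @ c)"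
    by (rule wag_sym, rule idem_idem_prod_commute)
  also have "wag \<dots> (?E @ ?E @ ?R @ c)"
    using wag_congL[OF wag_congR[OF idem_prod_removeAll[OF x], of c], of ?E] by simp
  also have "wag \<dots> (?E @ ?R @ c)" by (rule idem_absorb)
  also have "wag \<dots> (idem_prod xs @ c)"
    using wag_congR[OF wag_sym[OF idem_prod_removeAll[OF x]], of c] by simp
  finally show ?thesis .
qed

lemma wag_backtrack: "wag (u @ [b, letter_inv b]) (idem (u @ [b]) @ u)"
proof -
  have "wag (u @ [b, letter_inv b]) ((u @ winv u @ u) @ idem [b])"
    using wag_sym[OF wag_congR[OF wag_ax1[of u], of "idem [b]"]]
    by (simp add: idem_def winv_conv_letter_inv)
  also have "wag \<dots> (u @ idem [b] @ idem (winv u))"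
    using wag_congL[OF wag_ax2[of "winv u" "[b]"], of u] by (simp add: idem_def)
  also have "u @ idem [b] @ idem (winv u) = idem (u @ [b]) @ u"
    by (simp add: idem_def winv_conv_letter_inv rev_map o_def)
  finally show ?thesis .
qed

lemma wag_normal_form:
  "\<exists>xs. set xs = munn_tree [] w \<and> wag w (idem_prod xs @ rev (fg_end [] w))"
proof (induction w rule: rev_induct)
  case Nil
  show ?case by (rule exI[of _ "[[]]"]) (simp add: idem_def winv_conv_letter_inv wag_refl)
next
  case (snoc a w)
  then obtain xs where xs: "set xs = munn_tree [] w"
    and wxs: "wag w (idem_prod xs @ rev (fg_end [] w))" by blast
  let ?g = "fg_end [] w"
  have wa: "wag (w @ [a]) (idem_prod xs @ rev ?g @ [a])"
    using wag_congR[OF wxs, of "[a]"] by simp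
  show ?case
  proof (cases "?g \<noteq> [] \<and> hd ?g = letter_inv a")
    case False
    then have g: "fg_step ?g a = a # ?g" by (intro fg_step_push) auto
    let ?h = "rev ?g @ [a]"
    note wa
    also have "wag (idem_prod xs @ ?h) (idem_prod xs @ idem ?h @ ?h)"
      using wag_congL[OF wag_sym[OF wag_ax1[of ?h]]] by (simp add: idem_def)
    finally have "wag (w @ [a]) (idem_prod (xs @ [a # ?g]) @ rev (fg_end [] (w @ [a])))"
      using g by simp
    moreover have "set (xs @ [a # ?g]) = munn_tree [] (w @ [a])"
      using xs g by (simp add: munn_tree_snoc)
    ultimately show ?thesis by blast
  next
    case True
    then obtain g' where g: "?g = letter_inv a # g'" by (cases ?g) auto
    then have g'_end: "fg_step ?g a = g'" by (simp add: fg_step_def)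
    have "?g \<in> set xs" using xs fg_end_in_munn_tree by blast
    have g'_in: "g' \<in> munn_tree [] w"
      using munn_tree_tl_closed[OF fg_end_in_munn_tree[of "[]" w]] g by simp
    note wa
    also have "wag (idem_prod xs @ rev ?g @ [a]) (idem_prod xs @ idem (rev ?g) @ rev g')"
      using wag_congL[OF wag_backtrack[of "rev g'" "letter_inv a"]] g by simp
    also have "wag \<dots> (idem_prod xs @ rev g')" by (rule idem_prod_absorb) fact
    finally have "wag (w @ [a]) (idem_prod xs @ rev (fg_end [] (w @ [a])))"
      using g'_end by simp
    moreover have "set xs = munn_tree [] (w @ [a])"
      using xs g'_end g'_in by (auto simp: munn_tree_snoc)
    ultimately show ?thesis by blast
  qed
qed

theorem wag_iff_munn_tree:
  "wag w v \<longleftrightarrow> munn_tree [] w = munn_tree [] v \<and> fg_end [] w = fg_end [] v"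
proof
  assume eq: "munn_tree [] w = munn_tree [] v \<and> fg_end [] w = fg_end [] v"
  obtain xs where xs: "set xs = munn_tree [] w" "wag w (idem_prod xs @ rev (fg_end [] w))"
    using wag_normal_form by blast
  obtain ys where ys: "set ys = munn_tree [] v" "wag v (idem_prod ys @ rev (fg_end [] v))"
    using wag_normal_form by blast
  note xs(2)
  also have "wag (idem_prod xs @ rev (fg_end [] w)) (idem_prod ys @ rev (fg_end [] v))"
    using eq xs ys by (simp add: wag_congR idem_prod_set)
  also note wag_sym[OF ys(2)]
  finally show "wag w v" .
qed (simp add: wag_munn_invariant)

section \<open>Lengths of elements as marked trees\<close>

definition tl_closed :: "'b list set \<Rightarrow> bool" where
  "tl_closed V \<longleftrightarrow> (\<forall>v\<in>V. tl v \<in> V)"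

lemma suffixes_subset_tl_closed: "tl_closed V \<Longrightarrow> g \<in> V \<Longrightarrow> set (suffixes g) \<subseteq> V"
proof (induction g)
  case Nil
  then show ?case by (force simp: tl_closed_def)
next
  case (Cons c g)
  then have "g \<in> V" by (force simp: tl_closed_def)
  with Cons show ?case by simp
qed

definition marked_tree :: "('a \<times> bool) set \<Rightarrow> 'a fim_word set \<Rightarrow> 'a fim_word \<Rightarrow> bool" where
  "marked_tree D V g \<longleftrightarrow>
     finite V \<and> [] \<in> V \<and> tl_closed V \<and> (\<forall>v\<in>V. reduced v \<and> set v \<subseteq> D) \<and> g \<in> V"

text \<open>A word tracing the marked tree (V, g) crosses every edge of V twice, except the edges on
  the geodesic from the root to g, which it crosses once.\<close>

definition munn_length :: "'a fim_word set \<Rightarrow> 'a fim_word \<Rightarrow> nat" where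
  "munn_length V g = 2 * (card V - 1) - length g"

lemma length_less_card: "marked_tree D V g \<Longrightarrow> length g < card V"
  using card_mono[OF _ suffixes_subset_tl_closed[of V g]] by (auto simp: marked_tree_def)

lemma marked_tree_munn_tree:
  assumes "set w \<subseteq> D"
  shows "marked_tree D (munn_tree [] w) (fg_end [] w)"
proof -
  have "set v \<subseteq> D" if "v \<in> munn_tree [] w" for v
    using set_munn_tree[OF that] assms by auto
  then show ?thesis
    using munn_tree_tl_closed reduced_munn_tree[of "[]"]
    by (auto simp: marked_tree_def tl_closed_def start_in_munn_tree fg_end_in_munn_tree)
qed

lemma card_munn_tree_le: "2 * card (munn_tree [] w) \<le> length w + length (fg_end [] w) + 2"
proof (induction w rule: rev_induct)
  case (snoc a w)
  let ?g = "fg_end [] w"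
  show ?case
  proof (cases "?g \<noteq> [] \<and> hd ?g = letter_inv a")
    case False
    then have "fg_step ?g a = a # ?g" by (intro fg_step_push) auto
    moreover have "card (munn_tree [] (w @ [a])) \<le> Suc (card (munn_tree [] w))"
      by (simp add: munn_tree_snoc card_insert_le_m1 card_insert_if)
    ultimately show ?thesis using snoc by simp
  next
    case True
    then obtain g' where g: "?g = letter_inv a # g'" by (cases ?g) auto
    then have "fg_step ?g a = g'" by (simp add: fg_step_def)
    moreover have "g' \<in> munn_tree [] w"
      using munn_tree_tl_closed[OF fg_end_in_munn_tree[of "[]" w]] g by simp
    ultimately have "munn_tree [] (w @ [a]) = munn_tree [] w" by (auto simp: munn_tree_snoc)
    then show ?thesis using snoc g \<open>fg_step ?g a = g'\<close> by simp
  qed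
qed simp

corollary munn_length_le_length: "munn_length (munn_tree [] w) (fg_end [] w) \<le> length w"
  using card_munn_tree_le[of w] by (simp add: munn_length_def)

lemma munn_tree_rev_reduced:
  "reduced g \<Longrightarrow> munn_tree [] (rev g) = set (suffixes g) \<and> fg_end [] (rev g) = g"
proof (induction g)
  case (Cons c g)
  then have "fg_step g c = c # g"
    by (intro fg_step_push) (auto simp: reduced_Cons_iff reduced_tl)
  with Cons show ?case by (auto simp: munn_tree_snoc reduced_Cons_iff)
qed simp

text \<open>Inserting c c^{-1} at a moment where the path visits l' adds the vertex c l' to the tree.\<close>

lemma munn_tree_insert_leaf:
  assumes "l' \<in> munn_tree [] w" and "reduced (c # l')"
  obtains w' where "set w' = set w \<union> {c, letter_inv c}"
    and "munn_tree [] w' = insert (c # l') (munn_tree [] w)"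
    and "fg_end [] w' = fg_end [] w" and "length w' = length w + 2"
proof -
  obtain i where i: "i \<le> length w" "fg_end [] (take i w) = l'"
    using munn_tree_fg_end_take[OF assms(1)] by blast
  have up: "fg_step l' c = c # l'" using assms(2) by (intro fg_step_push) (auto simp: reduced_Cons_iff)
  have down: "fg_step (c # l') (letter_inv c) = l'" by (simp add: fg_step_def)
  define w' where "w' = take i w @ [c, letter_inv c] @ drop i w"
  have "munn_tree [] w' = munn_tree [] (take i w) \<union> insert (c # l') (munn_tree l' (drop i w))"
    using i up down start_in_munn_tree[of l' "drop i w"] by (simp add: w'_def munn_tree_append) blast
  also have "\<dots> = insert (c # l') (munn_tree [] w)"
    using i munn_tree_append[of "[]" "take i w" "drop i w"] start_in_munn_tree[of l' "drop i w"]
    by auto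
  finally have tree: "munn_tree [] w' = insert (c # l') (munn_tree [] w)" .
  have "fg_end [] w' = fg_end (fg_end [] (take i w)) (drop i w)"
    using i up down by (simp add: w'_def)
  then have endpoint: "fg_end [] w' = fg_end [] w" by (simp flip: fg_end_simps(3))
  have set: "set w' = set w \<union> {c, letter_inv c}"
    by (auto simp: w'_def simp flip: set_append[of "take i w" "drop i w"])
  have len: "length w' = length w + 2" using i by (simp add: w'_def)
  show thesis by (rule that[OF set tree endpoint len])
qed

lemma marked_tree_leaf_exists:
  assumes "marked_tree D V g" and "V \<noteq> set (suffixes g)"
  obtains c l' where "c # l' \<in> V" "c # l' \<notin> set (suffixes g)"
    and "marked_tree D (V - {c # l'}) g"
proof -
  have V: "finite V" "[] \<in> V" "tl_closed V" "g \<in> V" using assms(1) by (auto simp: marked_tree_def)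
  define B where "B = V - set (suffixes g)"
  have "B \<noteq> {}" "finite B"
    using assms(2) suffixes_subset_tl_closed[OF V(3,4)] V(1) by (auto simp: B_def)
  then have "Max (length ` B) \<in> length ` B" by (intro Max_in) auto
  then obtain l where lB: "l \<in> B" and "length l = Max (length ` B)" by auto
  with \<open>finite B\<close> have l_max: "length v \<le> length l" if "v \<in> B" for v
    using that by simp
  have "l \<noteq> []" using lB by (auto simp: B_def)
  then obtain c l' where l: "l = c # l'" by (cases l) auto
  have leaf: "d # l \<notin> V" for d
  proof
    assume "d # l \<in> V"
    moreover have "d # l \<notin> set (suffixes g)" using lB by (auto simp: B_def dest: suffix_ConsD)
    ultimately show False using l_max[of "d # l"] by (simp add: B_def)
  qed
  have "tl_closed (V - {l})"
    unfolding tl_closed_def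
  proof
    fix v assume v: "v \<in> V - {l}"
    have "tl v \<noteq> l"
    proof
      assume "tl v = l"
      with \<open>l \<noteq> []\<close> have "v = hd v # l" by (metis list.collapse list.sel(2))
      with v leaf show False by (metis DiffD1)
    qed
    with v V(3) show "tl v \<in> V - {l}" by (auto simp: tl_closed_def)
  qed
  then have "marked_tree D (V - {l}) g"
    using assms(1) lB \<open>l \<noteq> []\<close> by (auto simp: marked_tree_def B_def)
  with lB l show thesis by (intro that[of c l']) (auto simp: B_def)
qed

theorem marked_tree_realizable:
  assumes "letter_inv ` D \<subseteq> D" and "marked_tree D V g"
  obtains w where "set w \<subseteq> D" "munn_tree [] w = V" "fg_end [] w = g" "length w = munn_length V g"
  using assms(2)
proof (induction "card V" arbitrary: V thesis rule: less_induct)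
  case less
  have g: "reduced g" "set g \<subseteq> D" using less.prems(2) by (auto simp: marked_tree_def)
  show ?case
  proof (cases "V = set (suffixes g)")
    case True
    then show ?thesis
      using less.prems(1)[of "rev g"] munn_tree_rev_reduced[OF g(1)] g(2)
      by (simp add: munn_length_def)
  next
    case False
    obtain c l' where l: "c # l' \<in> V" "c # l' \<notin> set (suffixes g)"
      and V': "marked_tree D (V - {c # l'}) g"
      using marked_tree_leaf_exists[OF less.prems(2) False] by blast
    have "finite V" using less.prems(2) by (simp add: marked_tree_def)
    then have card_V: "card V = Suc (card (V - {c # l'}))" using l(1) by (metis card_Suc_Diff1)
    obtain w where w: "set w \<subseteq> D" "munn_tree [] w = V - {c # l'}" "fg_end [] w = g"
      "length w = munn_length (V - {c # l'}) g"
      using less.hyps[of "V - {c # l'}"] card_V V' by auto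
    have l'_in: "l' \<in> V - {c # l'}"
      using less.prems(2) l(1) by (auto simp: marked_tree_def tl_closed_def dest!: bspec)
    have c_in: "reduced (c # l')" "c \<in> D"
      using less.prems(2) l(1) by (auto simp: marked_tree_def)
    obtain w' where w': "set w' = set w \<union> {c, letter_inv c}"
      "munn_tree [] w' = insert (c # l') (munn_tree [] w)"
      "fg_end [] w' = fg_end [] w" "length w' = length w + 2"
      using munn_tree_insert_leaf[OF l'_in[folded w(2)] c_in(1)] by blast
    have "length g < card (V - {c # l'})" using length_less_card[OF V'] .
    then have "length w' = munn_length V g"
      using w(4) w'(4) card_V by (simp add: munn_length_def)
    moreover have "set w' \<subseteq> D" using w(1) w'(1) c_in(2) assms(1) by auto
    moreover have "munn_tree [] w' = V" using w(2) w'(2) l(1) by auto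
    moreover have "fg_end [] w' = g" using w(3) w'(3) by simp
    ultimately show ?thesis using less.prems(1) by blast
  qed
qed

lemma fim_words_iff: "w \<in> fim_words X \<longleftrightarrow> set w \<subseteq> X \<times> UNIV"
  by (auto simp: fim_words_def)

lemma fim_elem_eq_iff:
  assumes "v \<in> fim_words X"
  shows "fim_elem X w = fim_elem X v \<longleftrightarrow> wag w v"
proof
  assume "fim_elem X w = fim_elem X v"
  moreover have "v \<in> fim_elem X v" using assms by (simp add: fim_elem_def wag_refl)
  ultimately have "v \<in> fim_elem X w" by simp
  then show "wag w v" by (simp add: fim_elem_def)
qed (auto simp: fim_elem_def intro: wag_trans wag_sym)

theorem fim_length_fim_elem:
  assumes "w \<in> fim_words X"
  shows "fim_length (fim_elem X w) = munn_length (munn_tree [] w) (fg_end [] w)"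
  unfolding fim_length_def
proof (rule Least_equality)
  have "marked_tree (X \<times> UNIV) (munn_tree [] w) (fg_end [] w)"
    using assms by (simp add: fim_words_iff marked_tree_munn_tree)
  then obtain w0 where "set w0 \<subseteq> X \<times> UNIV" "munn_tree [] w0 = munn_tree [] w"
    "fg_end [] w0 = fg_end [] w" "length w0 = munn_length (munn_tree [] w) (fg_end [] w)"
    by (rule marked_tree_realizable[OF letter_inv_alphabet])
  then show "\<exists>v\<in>fim_elem X w. length v = munn_length (munn_tree [] w) (fg_end [] w)"
    by (auto simp: fim_elem_def fim_words_iff wag_iff_munn_tree)
next
  fix n assume "\<exists>v\<in>fim_elem X w. length v = n"
  then obtain v where "wag w v" "length v = n" by (auto simp: fim_elem_def)
  then show "munn_length (munn_tree [] w) (fg_end [] w) \<le> n"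
    using munn_length_le_length[of v] by (simp add: wag_iff_munn_tree)
qed

definition marked_trees :: "('a \<times> bool) set \<Rightarrow> nat \<Rightarrow> ('a fim_word set \<times> 'a fim_word) set" where
  "marked_trees D K = {(V, g). marked_tree D V g \<and> munn_length V g = K}"

lemma card_image_eq_if_same_fibres:
  assumes "\<And>x y. x \<in> A \<Longrightarrow> y \<in> A \<Longrightarrow> f x = f y \<longleftrightarrow> g x = g y"
  shows "card (f ` A) = card (g ` A)"
proof (rule bij_betw_same_card)
  have g_inv: "g (inv_into A f (f x)) = g x" if "x \<in> A" for x
    using assms[OF inv_into_into[of "f x" f A] that] that by (simp add: f_inv_into_f)
  show "bij_betw (\<lambda>b. g (inv_into A f b)) (f ` A) (g ` A)"
    unfolding bij_betw_def inj_on_def using g_inv assms by (auto simp: image_iff)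
qed

theorem card_fim_sphere: "card (fim_sphere X K) = card (marked_trees (X \<times> UNIV) K)"
proof -
  define W where "W = {w \<in> fim_words X. munn_length (munn_tree [] w) (fg_end [] w) = K}"
  have "fim_sphere X K = fim_elem X ` W"
    by (auto simp: fim_sphere_def FIM_def W_def fim_length_fim_elem)
  moreover have "marked_trees (X \<times> UNIV) K = (\<lambda>w. (munn_tree [] w, fg_end [] w)) ` W"
  proof
    show "marked_trees (X \<times> UNIV) K \<subseteq> (\<lambda>w. (munn_tree [] w, fg_end [] w)) ` W"
    proof safe
      fix V g assume "(V, g) \<in> marked_trees (X \<times> UNIV) K"
      then have "marked_tree (X \<times> UNIV) V g" "munn_length V g = K"
        by (simp_all add: marked_trees_def)
      moreover obtain w where "set w \<subseteq> X \<times> UNIV" "munn_tree [] w = V" "fg_end [] w = g"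
        by (rule marked_tree_realizable[OF letter_inv_alphabet \<open>marked_tree (X \<times> UNIV) V g\<close>])
      ultimately show "(V, g) \<in> (\<lambda>w. (munn_tree [] w, fg_end [] w)) ` W"
        by (auto simp: W_def fim_words_iff)
    qed
  qed (auto simp: marked_trees_def W_def fim_words_iff marked_tree_munn_tree)
  moreover have "fim_elem X w = fim_elem X v \<longleftrightarrow>
      (munn_tree [] w, fg_end [] w) = (munn_tree [] v, fg_end [] v)" if "v \<in> W" for w v
    using that by (simp add: W_def fim_elem_eq_iff wag_iff_munn_tree)
  ultimately show ?thesis by (simp add: card_image_eq_if_same_fibres)
qed

section \<open>Generating functions of subtrees\<close>

text \<open>Subtrees of depth at most m hanging from the vertex cs, with vertices written relative
  to cs: u stands for the vertex u @ cs.\<close>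

definition subtrees :: "('a \<times> bool) set \<Rightarrow> nat \<Rightarrow> 'a fim_word \<Rightarrow> 'a fim_word set set" where
  "subtrees D m cs =
     {S. [] \<in> S \<and> tl_closed S \<and> (\<forall>u\<in>S. set u \<subseteq> D \<and> length u \<le> m \<and> reduced (u @ cs))}"

definition children :: "('a \<times> bool) set \<Rightarrow> 'a fim_word \<Rightarrow> ('a \<times> bool) set" where
  "children D cs = {d \<in> D. reduced (d # cs)}"

text \<open>A subtree of depth m + 1 at cs consists of the root and, for each child d, either nothing
  or a subtree of depth m at d.\<close>

definition subtree_choices ::
    "('a \<times> bool) set \<Rightarrow> nat \<Rightarrow> 'a fim_word \<Rightarrow> (('a \<times> bool) \<Rightarrow> 'a fim_word set) set" where
  "subtree_choices D m cs = PiE (children D cs) (\<lambda>d. insert {} (subtrees D m [d]))"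

definition graft ::
    "('a \<times> bool) set \<Rightarrow> 'a fim_word \<Rightarrow> (('a \<times> bool) \<Rightarrow> 'a fim_word set) \<Rightarrow> 'a fim_word set" where
  "graft D cs F = insert [] (\<Union>d\<in>children D cs. (\<lambda>u. u @ [d]) ` F d)"

lemma finite_children: "finite D \<Longrightarrow> finite (children D cs)"
  by (simp add: children_def)

lemma children_Nil: "children D [] = D"
  by (auto simp: children_def)

lemma children_single: "d \<in> D \<Longrightarrow> children D [d] = D - {letter_inv d}"
  by (auto simp: children_def)

lemma subtrees_subset_Pow: "subtrees D m cs \<subseteq> Pow {u. set u \<subseteq> D \<and> length u \<le> m}"
  by (auto simp: subtrees_def)

lemma finite_subtrees: "finite D \<Longrightarrow> finite (subtrees D m cs)"
  by (rule finite_subset[OF subtrees_subset_Pow]) (simp add: finite_lists_length_le)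

lemma finite_of_mem_subtrees: "finite D \<Longrightarrow> S \<in> subtrees D m cs \<Longrightarrow> finite S"
  using subtrees_subset_Pow[of D m cs] finite_lists_length_le[of D m]
  by (auto intro: finite_subset)

lemma empty_notin_subtrees: "{} \<notin> subtrees D m cs"
  by (auto simp: subtrees_def)

lemma subtrees_0: "reduced cs \<Longrightarrow> subtrees D 0 cs = {{[]}}"
  by (auto simp: subtrees_def tl_closed_def)

lemma subtrees_mono: "m \<le> m' \<Longrightarrow> subtrees D m cs \<subseteq> subtrees D m' cs"
  by (auto simp: subtrees_def)

lemma finite_of_mem_subtree_choices:
  assumes "finite D" "F \<in> subtree_choices D m cs" "d \<in> children D cs"
  shows "finite (F d)"
proof -
  have "F d \<in> insert {} (subtrees D m [d])" using assms(2,3) by (auto simp: subtree_choices_def)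
  then show ?thesis using finite_of_mem_subtrees[OF assms(1)] by auto
qed

lemma graft_in_subtrees:
  assumes "reduced cs" and F: "F \<in> subtree_choices D m cs"
  shows "graft D cs F \<in> subtrees D (Suc m) cs"
proof -
  have Fd: "F d \<in> subtrees D m [d]" if "d \<in> children D cs" "u \<in> F d" for d u
    using F that by (auto simp: subtree_choices_def)
  have "tl v \<in> graft D cs F" if "v \<in> graft D cs F" for v
  proof -
    from that consider "v = []" | d u where "d \<in> children D cs" "u \<in> F d" "v = u @ [d]"
      by (auto simp: graft_def)
    then show ?thesis
    proof cases
      case 2
      then have "tl u \<in> F d" "[] \<in> F d" using Fd[of d u] by (auto simp: subtrees_def tl_closed_def)
      with 2 show ?thesis by (cases u) (auto simp: graft_def)
    qed (simp add: graft_def)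
  qed
  moreover have "set v \<subseteq> D \<and> length v \<le> Suc m \<and> reduced (v @ cs)" if "v \<in> graft D cs F" for v
  proof -
    from that consider "v = []" | d u where "d \<in> children D cs" "u \<in> F d" "v = u @ [d]"
      by (auto simp: graft_def)
    then show ?thesis
    proof cases
      case 2
      then have "set u \<subseteq> D" "length u \<le> m" "reduced (u @ [d])"
        using Fd[of d u] by (auto simp: subtrees_def)
      moreover have "d \<in> D" "reduced (d # cs)" using 2 by (auto simp: children_def)
      ultimately show ?thesis using 2 reduced_join[of u d cs] by auto
    qed (use assms(1) in simp)
  qed
  ultimately show ?thesis by (auto simp: subtrees_def tl_closed_def graft_def)
qed

lemma graft_surj:
  assumes S: "S \<in> subtrees D (Suc m) cs"
  shows "S \<in> graft D cs ` subtree_choices D m cs"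
proof -
  define F where "F = (\<lambda>d\<in>children D cs. {u. u @ [d] \<in> S})"
  have tS: "tl_closed S" and "[] \<in> S"
    and uS: "\<And>u. u \<in> S \<Longrightarrow> set u \<subseteq> D \<and> length u \<le> Suc m \<and> reduced (u @ cs)"
    using S by (auto simp: subtrees_def)
  have "F d \<in> insert {} (subtrees D m [d])" if d: "d \<in> children D cs" for d
  proof (cases "F d = {}")
    case False
    then obtain u0 where "u0 @ [d] \<in> S" using d by (auto simp: F_def)
    then have "[d] \<in> S" using suffixes_subset_tl_closed[OF tS] by fastforce
    have "tl u \<in> F d" if "u \<in> F d" for u
    proof -
      have "tl (u @ [d]) \<in> S" using that d tS by (auto simp: F_def tl_closed_def)
      then show ?thesis using d \<open>[d] \<in> S\<close> by (cases u) (auto simp: F_def)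
    qed
    moreover have "set u \<subseteq> D \<and> length u \<le> m \<and> reduced (u @ [d])" if "u \<in> F d" for u
      using uS[of "u @ [d]"] that d reduced_appendD[of "u @ [d]" cs] by (auto simp: F_def)
    ultimately show ?thesis using d \<open>[d] \<in> S\<close> by (auto simp: subtrees_def tl_closed_def F_def)
  qed simp
  then have "F \<in> subtree_choices D m cs" by (auto simp: subtree_choices_def F_def)
  moreover have "graft D cs F = S"
  proof
    show "graft D cs F \<subseteq> S" using \<open>[] \<in> S\<close> by (auto simp: graft_def F_def)
    show "S \<subseteq> graft D cs F"
    proof
      fix v assume v: "v \<in> S"
      show "v \<in> graft D cs F"
      proof (cases v rule: rev_cases)
        case (snoc u d)
        then have "d \<in> D" "reduced (d # cs)"
          using uS[OF v] reduced_appendD[of u "d # cs"] by auto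
        then have "d \<in> children D cs" by (simp add: children_def)
        with v snoc show ?thesis unfolding graft_def by (intro insertI2 UN_I[of d]) (auto simp: F_def)
      qed (simp add: graft_def)
    qed
  qed
  ultimately show ?thesis by blast
qed

lemma bij_betw_graft:
  assumes "reduced cs"
  shows "bij_betw (graft D cs) (subtree_choices D m cs) (subtrees D (Suc m) cs)"
proof (rule bij_betw_imageI)
  show "inj_on (graft D cs) (subtree_choices D m cs)"
  proof (rule inj_onI)
    fix F G assume F: "F \<in> subtree_choices D m cs" and G: "G \<in> subtree_choices D m cs"
      and eq: "graft D cs F = graft D cs G"
    have branch: "{u. u @ [d] \<in> graft D cs H} = H d" if "d \<in> children D cs" for H d
      using that by (auto simp: graft_def)
    have "F \<in> extensional (children D cs)" "G \<in> extensional (children D cs)"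
      using F G by (auto simp: subtree_choices_def PiE_def)
    moreover have "F d = G d" if "d \<in> children D cs" for d
      using branch[OF that, of F] branch[OF that, of G] eq by simp
    ultimately show "F = G" by (rule extensionalityI)
  qed
  show "graft D cs ` subtree_choices D m cs = subtrees D (Suc m) cs"
    using graft_in_subtrees[OF assms] graft_surj by blast
qed

definition depth_sum :: "real \<Rightarrow> 'a fim_word set \<Rightarrow> real" where
  "depth_sum s T = (\<Sum>u\<in>T. s ^ length u)"

definition tree_gf :: "('a \<times> bool) set \<Rightarrow> nat \<Rightarrow> 'a fim_word \<Rightarrow> real \<Rightarrow> real" where
  "tree_gf D m cs x = (\<Sum>S\<in>subtrees D m cs. x ^ (card S - 1))"

definition marked_tree_gf :: "('a \<times> bool) set \<Rightarrow> nat \<Rightarrow> 'a fim_word \<Rightarrow> real \<Rightarrow> real \<Rightarrow> real" where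
  "marked_tree_gf D m cs x s = (\<Sum>S\<in>subtrees D m cs. x ^ (card S - 1) * depth_sum s S)"

lemma tree_gf_0: "reduced cs \<Longrightarrow> tree_gf D 0 cs x = 1"
  and marked_tree_gf_0: "reduced cs \<Longrightarrow> marked_tree_gf D 0 cs x s = 1"
  by (simp_all add: tree_gf_def marked_tree_gf_def subtrees_0 depth_sum_def)

lemma card_depth_sum_graft:
  assumes fD: "finite D" and F: "F \<in> subtree_choices D m cs"
  shows "card (graft D cs F) = Suc (\<Sum>d\<in>children D cs. card (F d))"
    and "depth_sum s (graft D cs F) = 1 + (\<Sum>d\<in>children D cs. s * depth_sum s (F d))"
proof -
  let ?U = "\<Union>d\<in>children D cs. (\<lambda>u. u @ [d]) ` F d"
  have fin: "finite (children D cs)" "\<forall>d\<in>children D cs. finite (F d)"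
    using fD finite_children finite_of_mem_subtree_choices[OF fD F] by auto
  have disj: "\<forall>d\<in>children D cs. \<forall>d'\<in>children D cs. d \<noteq> d' \<longrightarrow>
      (\<lambda>u. u @ [d]) ` F d \<inter> (\<lambda>u. u @ [d']) ` F d' = {}"
    by auto
  have inj: "inj_on (\<lambda>u. u @ [d]) A" for d :: "'a \<times> bool" and A by (auto simp: inj_on_def)
  have "[] \<notin> ?U" "finite ?U" using fin by auto
  moreover have "card ?U = (\<Sum>d\<in>children D cs. card ((\<lambda>u. u @ [d]) ` F d))"
    by (rule card_UN_disjoint) (use fin disj in auto)
  moreover have "depth_sum s ?U = (\<Sum>d\<in>children D cs. depth_sum s ((\<lambda>u. u @ [d]) ` F d))"
    unfolding depth_sum_def by (rule sum.UNION_disjoint) (use fin disj in auto)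
  moreover have "depth_sum s ((\<lambda>u. u @ [d]) ` F d) = s * depth_sum s (F d)" for d
    by (simp add: depth_sum_def sum.reindex[OF inj] sum_distrib_left)
  ultimately show "card (graft D cs F) = Suc (\<Sum>d\<in>children D cs. card (F d))"
    and "depth_sum s (graft D cs F) = 1 + (\<Sum>d\<in>children D cs. s * depth_sum s (F d))"
    by (simp_all add: graft_def card_image[OF inj]) (simp add: depth_sum_def)
qed

lemma sum_subtrees_or_empty:
  assumes "finite D"
  shows "(\<Sum>T\<in>insert {} (subtrees D m cs). x ^ card T) = 1 + x * tree_gf D m cs x"
    and "(\<Sum>T\<in>insert {} (subtrees D m cs). x ^ card T * depth_sum s T)
           = x * marked_tree_gf D m cs x s"
proof -
  have card_T: "card T = Suc (card T - 1)" if "T \<in> subtrees D m cs" for T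
  proof -
    have "T \<noteq> {}" using that empty_notin_subtrees by blast
    with finite_of_mem_subtrees[OF assms that] show ?thesis by (simp add: card_gt_0_iff)
  qed
  have "(\<Sum>T\<in>subtrees D m cs. x ^ card T) = x * tree_gf D m cs x"
    unfolding tree_gf_def sum_distrib_left by (rule sum.cong[OF refl]) (subst card_T, auto)
  then show "(\<Sum>T\<in>insert {} (subtrees D m cs). x ^ card T) = 1 + x * tree_gf D m cs x"
    by (simp add: finite_subtrees[OF assms] empty_notin_subtrees)
  have "(\<Sum>T\<in>subtrees D m cs. x ^ card T * depth_sum s T) = x * marked_tree_gf D m cs x s"
    unfolding marked_tree_gf_def sum_distrib_left by (rule sum.cong[OF refl]) (subst card_T, auto)
  then show "(\<Sum>T\<in>insert {} (subtrees D m cs). x ^ card T * depth_sum s T)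
      = x * marked_tree_gf D m cs x s"
    by (simp add: finite_subtrees[OF assms] empty_notin_subtrees depth_sum_def)
qed

lemma sum_subtree_choices_prod:
  assumes fD: "finite D"
  shows "(\<Sum>F\<in>subtree_choices D m cs. \<Prod>d\<in>children D cs. x ^ card (F d)) =
    (\<Prod>d\<in>children D cs. 1 + x * tree_gf D m [d] x)"
proof -
  have "(\<Sum>F\<in>subtree_choices D m cs. \<Prod>d\<in>children D cs. x ^ card (F d)) =
      (\<Prod>d\<in>children D cs. \<Sum>T\<in>insert {} (subtrees D m [d]). x ^ card T)"
    unfolding subtree_choices_def
    by (rule prod_sum_PiE[symmetric]) (use fD finite_children finite_subtrees in auto)
  then show ?thesis by (simp add: sum_subtrees_or_empty[OF fD])
qed

lemma sum_subtree_choices_marked: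
  assumes fD: "finite D" and d: "d \<in> children D cs"
  shows "(\<Sum>F\<in>subtree_choices D m cs. (\<Prod>d'\<in>children D cs. x ^ card (F d')) * depth_sum s (F d)) =
    x * marked_tree_gf D m [d] x s * (\<Prod>d'\<in>children D cs - {d}. 1 + x * tree_gf D m [d'] x)"
proof -
  let ?A = "children D cs" and ?h = "\<lambda>d' T. x ^ card T * (if d' = d then depth_sum s T else 1)"
  have "(\<Sum>F\<in>subtree_choices D m cs. (\<Prod>d'\<in>?A. x ^ card (F d')) * depth_sum s (F d)) =
      (\<Sum>F\<in>subtree_choices D m cs. \<Prod>d'\<in>?A. ?h d' (F d'))"
    by (rule sum.cong[OF refl]) (simp add: prod.distrib d prod.delta[OF finite_children[OF fD]])
  also have "\<dots> = (\<Prod>d'\<in>?A. \<Sum>T\<in>insert {} (subtrees D m [d']). ?h d' T)"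
    unfolding subtree_choices_def
    by (rule prod_sum_PiE[symmetric]) (use fD finite_children finite_subtrees in auto)
  also have "\<dots> = (\<Sum>T\<in>insert {} (subtrees D m [d]). ?h d T) *
      (\<Prod>d'\<in>?A - {d}. \<Sum>T\<in>insert {} (subtrees D m [d']). ?h d' T)"
    by (rule prod.remove[OF finite_children[OF fD] d])
  also have "\<dots> = x * marked_tree_gf D m [d] x s * (\<Prod>d'\<in>?A - {d}. 1 + x * tree_gf D m [d'] x)"
    using sum_subtrees_or_empty[OF fD] by simp
  finally show ?thesis .
qed

lemma tree_gf_Suc:
  assumes fD: "finite D" and "reduced cs"
  shows "tree_gf D (Suc m) cs x = (\<Prod>d\<in>children D cs. 1 + x * tree_gf D m [d] x)"
proof -
  have "tree_gf D (Suc m) cs x = (\<Sum>F\<in>subtree_choices D m cs. x ^ (card (graft D cs F) - 1))"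
    unfolding tree_gf_def by (rule sum.reindex_bij_betw[OF bij_betw_graft[OF assms(2)], symmetric])
  also have "\<dots> = (\<Sum>F\<in>subtree_choices D m cs. \<Prod>d\<in>children D cs. x ^ card (F d))"
    by (rule sum.cong[OF refl]) (simp add: card_depth_sum_graft[OF fD] power_sum)
  finally show ?thesis by (simp add: sum_subtree_choices_prod[OF fD])
qed

text \<open>Marking a vertex of the grafted tree either marks the root or a vertex in one branch.\<close>

lemma marked_tree_gf_Suc:
  assumes fD: "finite D" and "reduced cs"
  shows "marked_tree_gf D (Suc m) cs x s = tree_gf D (Suc m) cs x +
    (\<Sum>d\<in>children D cs. s * (x * marked_tree_gf D m [d] x s *
        (\<Prod>d'\<in>children D cs - {d}. 1 + x * tree_gf D m [d'] x)))"
proof -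
  let ?P = "subtree_choices D m cs" and ?A = "children D cs"
  have "marked_tree_gf D (Suc m) cs x s =
      (\<Sum>F\<in>?P. x ^ (card (graft D cs F) - 1) * depth_sum s (graft D cs F))"
    unfolding marked_tree_gf_def
    by (rule sum.reindex_bij_betw[OF bij_betw_graft[OF assms(2)], symmetric])
  also have "\<dots> = (\<Sum>F\<in>?P. (\<Prod>d\<in>?A. x ^ card (F d)) * (1 + (\<Sum>d\<in>?A. s * depth_sum s (F d))))"
    by (rule sum.cong[OF refl]) (simp add: card_depth_sum_graft[OF fD] power_sum)
  also have "\<dots> = (\<Sum>F\<in>?P. \<Prod>d\<in>?A. x ^ card (F d)) +
      (\<Sum>d\<in>?A. s * (\<Sum>F\<in>?P. (\<Prod>d'\<in>?A. x ^ card (F d')) * depth_sum s (F d)))"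
    by (simp add: algebra_simps sum.distrib sum_distrib_left sum_distrib_right sum.swap[of _ ?A])
  finally show ?thesis
    by (simp add: sum_subtree_choices_prod[OF fD] sum_subtree_choices_marked[OF fD]
        tree_gf_Suc[OF assms])
qed

lemma tree_gfs_Suc_uniform:
  assumes fD: "finite D" and "reduced cs"
    and uniform: "\<And>d. d \<in> children D cs \<Longrightarrow> tree_gf D m [d] x = a \<and> marked_tree_gf D m [d] x s = b"
  defines "q \<equiv> card (children D cs)"
  shows "tree_gf D (Suc m) cs x = (1 + x * a) ^ q"
    and "marked_tree_gf D (Suc m) cs x s =
           (1 + x * a) ^ q + s * (real q * (x * b * (1 + x * a) ^ (q - 1)))"
proof -
  show tree: "tree_gf D (Suc m) cs x = (1 + x * a) ^ q"
    using tree_gf_Suc[OF fD assms(2)] uniform by (simp add: q_def)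
  have "(\<Prod>d'\<in>children D cs - {d}. 1 + x * tree_gf D m [d'] x) = (1 + x * a) ^ (q - 1)"
    if "d \<in> children D cs" for d
    using that uniform finite_children[OF fD] by (simp add: q_def card_Diff_singleton)
  then have "marked_tree_gf D (Suc m) cs x s =
      (1 + x * a) ^ q + (\<Sum>d\<in>children D cs. s * (x * b * (1 + x * a) ^ (q - 1)))"
    using marked_tree_gf_Suc[OF fD assms(2), of m x s] uniform tree by simp
  then show "marked_tree_gf D (Suc m) cs x s =
      (1 + x * a) ^ q + s * (real q * (x * b * (1 + x * a) ^ (q - 1)))"
    by (simp add: q_def mult_ac)
qed

text \<open>Below a non-root vertex every vertex has p = |D| - 1 children, so the generating functions
  depend only on the depth.\<close>

fun branch_gf :: "nat \<Rightarrow> real \<Rightarrow> nat \<Rightarrow> real" where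
  "branch_gf p x 0 = 1"
| "branch_gf p x (Suc m) = (1 + x * branch_gf p x m) ^ p"

fun marked_branch_gf :: "nat \<Rightarrow> real \<Rightarrow> real \<Rightarrow> nat \<Rightarrow> real" where
  "marked_branch_gf p x s 0 = 1"
| "marked_branch_gf p x s (Suc m) = branch_gf p x (Suc m) +
     s * (real p * (x * marked_branch_gf p x s m * (1 + x * branch_gf p x m) ^ (p - 1)))"

lemma tree_gfs_single:
  assumes fD: "finite D" and invD: "letter_inv ` D \<subseteq> D" and "d \<in> D"
  shows "tree_gf D m [d] x = branch_gf (card D - 1) x m
    \<and> marked_tree_gf D m [d] x s = marked_branch_gf (card D - 1) x s m"
  using assms(3)
proof (induction m arbitrary: d)
  case 0
  then show ?case by (simp add: tree_gf_0 marked_tree_gf_0)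
next
  case (Suc m)
  have q: "card (children D [d]) = card D - 1"
    using Suc.prems invD fD by (simp add: children_single card_Diff_singleton image_subset_iff)
  have u: "tree_gf D m [e] x = branch_gf (card D - 1) x m
      \<and> marked_tree_gf D m [e] x s = marked_branch_gf (card D - 1) x s m"
    if "e \<in> children D [d]" for e
    using Suc.IH that Suc.prems by (simp add: children_single)
  show ?case using tree_gfs_Suc_uniform[OF fD _ u] q by simp
qed

lemma marked_tree_gf_root:
  assumes fD: "finite D" and invD: "letter_inv ` D \<subseteq> D"
  defines "p \<equiv> card D - 1"
  shows "marked_tree_gf D (Suc m) [] x s = (1 + x * branch_gf p x m) ^ card D
      + s * (real (card D) * (x * marked_branch_gf p x s m * (1 + x * branch_gf p x m) ^ p))"
proof -
  have u: "tree_gf D m [d] x = branch_gf p x m \<and> marked_tree_gf D m [d] x s = marked_branch_gf p x s m"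
    if "d \<in> children D []" for d
    using tree_gfs_single[OF fD invD] that by (simp add: children_Nil p_def)
  show ?thesis using tree_gfs_Suc_uniform(2)[where cs = "[]", OF fD _ u] by (simp add: children_Nil p_def)
qed

text \<open>With x = t^2 and s = 1/t the marked tree (V, g) is weighted by t ^ munn_length V g, so the
  root generating functions interpolate the power series of the sphere sizes.\<close>

lemma marked_tree_in_subtrees: "marked_tree D V g \<Longrightarrow> V \<in> subtrees D (card V - 1) []"
  using length_less_card[of D V] by (fastforce simp: subtrees_def marked_tree_def)

lemma marked_tree_of_mem_subtrees:
  "finite D \<Longrightarrow> V \<in> subtrees D M [] \<Longrightarrow> g \<in> V \<Longrightarrow> marked_tree D V g"
  using finite_of_mem_subtrees[of D V M "[]"] by (auto simp: subtrees_def marked_tree_def)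

lemma marked_trees_subset_Sigma: "marked_trees D K \<subseteq> Sigma (subtrees D K []) (\<lambda>V. V)"
proof safe
  fix V g assume "(V, g) \<in> marked_trees D K"
  then have mt: "marked_tree D V g" and K: "munn_length V g = K" by (auto simp: marked_trees_def)
  have "card V - 1 \<le> K" using length_less_card[OF mt] K by (simp add: munn_length_def)
  then show "V \<in> subtrees D K []" using subtrees_mono marked_tree_in_subtrees[OF mt] by blast
  show "g \<in> V" using mt by (simp add: marked_tree_def)
qed

lemma finite_Sigma_subtrees: "finite D \<Longrightarrow> finite (Sigma (subtrees D M []) (\<lambda>V. V))"
  using finite_subtrees[of D M "[]"] finite_of_mem_subtrees[of D _ M "[]"]
  by (intro finite_SigmaI) auto

lemma finite_marked_trees: "finite D \<Longrightarrow> finite (marked_trees D K)"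
  using finite_subset[OF marked_trees_subset_Sigma finite_Sigma_subtrees] by blast

lemma marked_tree_gf_eq_sum:
  assumes fD: "finite D" and t: "t > 0"
  shows "marked_tree_gf D M [] (t^2) (1/t) =
    (\<Sum>(V, g)\<in>Sigma (subtrees D M []) (\<lambda>V. V). t ^ munn_length V g)"
proof -
  have "marked_tree_gf D M [] (t^2) (1/t) = (\<Sum>V\<in>subtrees D M []. \<Sum>g\<in>V. t ^ munn_length V g)"
    unfolding marked_tree_gf_def depth_sum_def sum_distrib_left
  proof (intro sum.cong refl)
    fix V g assume "V \<in> subtrees D M []" "g \<in> V"
    then have "length g < card V" using length_less_card marked_tree_of_mem_subtrees[OF fD] by blast
    then have "t ^ munn_length V g = t ^ (2 * (card V - 1)) / t ^ length g"
      using t by (simp add: munn_length_def power_diff)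
    then show "(t^2) ^ (card V - 1) * (1 / t) ^ length g = t ^ munn_length V g"
      by (simp add: power_mult power_one_over divide_inverse power_inverse)
  qed
  also have "\<dots> = (\<Sum>(V, g)\<in>Sigma (subtrees D M []) (\<lambda>V. V). t ^ munn_length V g)"
    by (rule sum.Sigma) (use finite_subtrees[OF fD] finite_of_mem_subtrees[OF fD] in auto)
  finally show ?thesis .
qed

lemma sum_marked_trees:
  "(\<Sum>(V, g)\<in>marked_trees D K. t ^ munn_length V g) = real (card (marked_trees D K)) * t ^ K"
  by (simp add: marked_trees_def case_prod_beta)

lemma card_marked_trees_le_gf:
  assumes "finite D" and "t > 0"
  shows "real (card (marked_trees D K)) * t ^ K \<le> marked_tree_gf D K [] (t^2) (1/t)"
  unfolding marked_tree_gf_eq_sum[OF assms] sum_marked_trees[symmetric]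
  by (rule sum_mono2[OF finite_Sigma_subtrees[OF assms(1)] marked_trees_subset_Sigma]) (use assms(2) in auto)

lemma gf_le_sum_card_marked_trees:
  assumes fD: "finite D" and t: "t > 0"
  obtains L
  where "marked_tree_gf D M [] (t^2) (1/t) \<le> (\<Sum>K\<le>L. real (card (marked_trees D K)) * t ^ K)"
proof
  define L where "L = 2 * card {u. set u \<subseteq> D \<and> length u \<le> M}"
  have "Sigma (subtrees D M []) (\<lambda>V. V) \<subseteq> (\<Union>K\<le>L. marked_trees D K)"
  proof safe
    fix V g assume V: "V \<in> subtrees D M []" and "g \<in> V"
    then have "marked_tree D V g" by (rule marked_tree_of_mem_subtrees[OF fD])
    moreover have "card V \<le> card {u. set u \<subseteq> D \<and> length u \<le> M}"
      using V by (intro card_mono) (auto simp: subtrees_def finite_lists_length_le fD)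
    then have "munn_length V g \<le> L" by (simp add: munn_length_def L_def)
    ultimately show "(V, g) \<in> (\<Union>K\<le>L. marked_trees D K)" by (auto simp: marked_trees_def)
  qed
  then have "marked_tree_gf D M [] (t^2) (1/t) \<le>
      (\<Sum>(V, g)\<in>(\<Union>K\<le>L. marked_trees D K). t ^ munn_length V g)"
    unfolding marked_tree_gf_eq_sum[OF fD t]
    by (intro sum_mono2) (use finite_marked_trees[OF fD] t in auto)
  also have "\<dots> = (\<Sum>K\<le>L. \<Sum>(V, g)\<in>marked_trees D K. t ^ munn_length V g)"
    by (rule sum.UNION_disjoint) (use finite_marked_trees[OF fD] in \<open>auto simp: marked_trees_def\<close>)
  finally show
    "marked_tree_gf D M [] (t^2) (1/t) \<le> (\<Sum>K\<le>L. real (card (marked_trees D K)) * t ^ K)"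
    by (simp only: sum_marked_trees)
qed

section \<open>The growth polynomial\<close>

definition growth_poly :: "nat \<Rightarrow> real \<Rightarrow> real" where
  "growth_poly p z = real p ^ p * z ^ (p - 2) - (real p * z - 1) ^ (p - 1)"

lemma ge_3_exponents:
  assumes "p \<ge> 3"
  obtains k where "p = Suc (Suc (Suc k))" "p - 1 = Suc (Suc k)" "p - 2 = Suc k"
proof -
  obtain k where "p = 3 + k" using le_Suc_ex[OF assms] by blast
  then show thesis by (intro that[of k]) simp_all
qed

lemma growth_ratio_strict_mono:
  fixes z1 z2 :: real
  assumes p: "p \<ge> 3" and z1: "1 / real p < z1" and z12: "z1 < z2"
  shows "(real p * z1 - 1) ^ (p - 1) * z2 ^ (p - 2) < (real p * z2 - 1) ^ (p - 1) * z1 ^ (p - 2)"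
proof -
  obtain k where k: "p - 1 = Suc (Suc k)" "p - 2 = Suc k" using ge_3_exponents[OF p] by metis
  have pp: "real p > 0" using p by simp
  define a where "a = real p * z1 - 1"
  define b where "b = real p * z2 - 1"
  have a0: "a > 0" using z1 pp unfolding a_def by (simp add: field_simps)
  have z10: "z1 > 0" using z1 pp by (meson divide_pos_pos less_trans zero_less_one)
  have ab: "a < b" using z12 pp unfolding a_def b_def by simp
  have az: "a * z2 < b * z1" using z12 unfolding a_def b_def by (simp add: algebra_simps)
  have az0: "0 < a * z2" using a0 z10 z12 by simp
  have "(a * z2) ^ (p - 2) \<le> (b * z1) ^ (p - 2)" using az az0 by (intro power_mono) auto
  moreover have "0 < (a * z2) ^ (p - 2)" using az0 by simp
  ultimately have "a * (a * z2) ^ (p - 2) < b * (b * z1) ^ (p - 2)"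
    using ab a0 by (intro mult_less_le_imp_less) auto
  then show ?thesis unfolding a_def[symmetric] b_def[symmetric] k by (simp add: power_mult_distrib mult_ac)
qed

lemma growth_poly_pos_at_p: "p \<ge> 3 \<Longrightarrow> growth_poly p (real p) > 0"
proof -
  assume p: "p \<ge> 3"
  obtain k where k: "p = Suc (Suc (Suc k))" "p - 1 = Suc (Suc k)" "p - 2 = Suc k"
    using ge_3_exponents[OF p] by metis
  have rp: "real p \<ge> 1" using p by simp
  have "1 \<le> real p * real p" using mult_mono[OF rp rp] by simp
  then have "(real p * real p - 1) ^ (p - 1) < (real p * real p) ^ (p - 1)"
    using p by (intro power_strict_mono) auto
  also have "\<dots> = real p ^ p * real p ^ (p - 2)"
    unfolding k(2,3) by (subst (2) k(1)) (simp add: power_mult_distrib)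
  finally show ?thesis by (simp add: growth_poly_def)
qed

text \<open>At z = p + 1, write (p z - 1)^(p-1) = c^(p-1) (1 - 1/c)^(p-1) with c = p (p + 1) and apply
  Bernoulli's inequality.\<close>

lemma growth_poly_neg_at_Suc_p: "p \<ge> 3 \<Longrightarrow> growth_poly p (real p + 1) < 0"
proof -
  assume p: "p \<ge> 3"
  obtain k where k: "p = Suc (Suc (Suc k))" "p - 1 = Suc (Suc k)" "p - 2 = Suc k"
    using ge_3_exponents[OF p] by metis
  define c where "c = real p * (real p + 1)"
  have rp: "real p \<ge> 1" using p by simp
  have "1 * 1 < real p * (real p + 1)" using rp by (intro mult_le_less_imp_less) auto
  then have c1: "c > 1" unfolding c_def by simp
  have bernoulli: "1 + real (p - 1) * (- 1 / c) \<le> (1 + (- 1 / c)) ^ (p - 1)"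
    using c1 by (intro Bernoulli_inequality) (simp add: field_simps)
  have e1: "(real p * (real p + 1) - 1) ^ (p - 1) = c ^ (p - 1) * (1 + (- 1 / c)) ^ (p - 1)"
    using c1 by (simp add: c_def power_mult_distrib[symmetric] algebra_simps)
  have e2: "real p ^ p * (real p + 1) ^ (p - 2) = c ^ (p - 1) * (real p / (real p + 1))"
  proof -
    have "c ^ (p - 1) = real p ^ (p - 1) * (real p + 1) ^ (p - 1)"
      by (simp add: c_def power_mult_distrib)
    moreover have "(real p + 1) ^ (p - 1) = (real p + 1) ^ (p - 2) * (real p + 1)" using k by simp
    moreover have "real p ^ p = real p ^ (p - 1) * real p" using k by simp
    ultimately show ?thesis by (simp add: field_simps)
  qed
  have "real p / (real p + 1) < 1 + real (p - 1) * (- 1 / c)"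
  proof -
    have "real (p - 1) * (1 / c) = ((real p - 1) / real p) * (1 / (real p + 1))"
      using p by (simp add: c_def of_nat_diff)
    moreover have "((real p - 1) / real p) * (1 / (real p + 1)) < 1 * (1 / (real p + 1))"
      using rp by (intro mult_strict_right_mono) auto
    moreover have "real p / (real p + 1) = 1 - 1 / (real p + 1)" using rp by (simp add: field_simps)
    ultimately show ?thesis by simp
  qed
  also note bernoulli
  finally have "c ^ (p - 1) * (real p / (real p + 1)) < c ^ (p - 1) * (1 + (- 1 / c)) ^ (p - 1)"
    using c1 by (intro mult_strict_left_mono) auto
  then show ?thesis unfolding growth_poly_def using e1 e2 by (simp add: algebra_simps)
qed

lemma growth_poly_root_exists:
  assumes "p \<ge> 3"
  obtains y where "real p < y" "y < real p + 1" "growth_poly p y = 0"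
proof -
  have "isCont (growth_poly p) x" for x
    unfolding growth_poly_def by (intro continuous_intros)
  then obtain y where y: "real p \<le> y" "y \<le> real p + 1" "growth_poly p y = 0"
    using IVT2[of "growth_poly p" "real p + 1" 0 "real p"]
      growth_poly_pos_at_p[OF assms] growth_poly_neg_at_Suc_p[OF assms] by force
  moreover have "y \<noteq> real p" "y \<noteq> real p + 1"
    using y growth_poly_pos_at_p[OF assms] growth_poly_neg_at_Suc_p[OF assms] by auto
  ultimately have "real p < y" "y < real p + 1" by auto
  then show thesis using y(3) by (rule that)
qed

lemma growth_poly_sign:
  assumes p: "p \<ge> 3" and y: "1 / real p < y" "growth_poly p y = 0" and z: "1 / real p < z"
  shows "z < y \<Longrightarrow> growth_poly p z > 0" and "y < z \<Longrightarrow> growth_poly p z < 0"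
proof -
  have y0: "y > 0" using y p by (meson divide_pos_pos less_trans of_nat_0_less_iff zero_less_one
    order_less_le_trans numeral_le_iff zero_less_numeral)
  have yr: "(real p * y - 1) ^ (p - 1) = real p ^ p * y ^ (p - 2)"
    using y(2) by (simp add: growth_poly_def)
  show "growth_poly p z > 0" if zy: "z < y"
  proof -
    have "(real p * z - 1) ^ (p - 1) * y ^ (p - 2) < (real p * y - 1) ^ (p - 1) * z ^ (p - 2)"
      by (rule growth_ratio_strict_mono[OF p z zy])
    also have "\<dots> = (real p ^ p * z ^ (p - 2)) * y ^ (p - 2)" unfolding yr by simp
    finally show ?thesis using y0 by (simp add: mult_less_cancel_right growth_poly_def)
  qed
  show "growth_poly p z < 0" if zy: "y < z"
  proof -
    have "(real p ^ p * z ^ (p - 2)) * y ^ (p - 2) = (real p * y - 1) ^ (p - 1) * z ^ (p - 2)"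
      unfolding yr by simp
    also have "\<dots> < (real p * z - 1) ^ (p - 1) * y ^ (p - 2)"
      by (rule growth_ratio_strict_mono[OF p y(1) zy])
    finally show ?thesis using y0 by (simp add: mult_less_cancel_right growth_poly_def)
  qed
qed

lemma one_over_less_self: "p \<ge> 3 \<Longrightarrow> 1 / real p < real p"
proof -
  assume "p \<ge> 3"
  then have "1 / real p \<le> 1" "real p \<ge> 3" by simp_all
  then show ?thesis by linarith
qed

lemma growth_poly_root_le:
  assumes p: "p \<ge> 3" and y: "real p < y" "growth_poly p y = 0" and z: "growth_poly p z = 0"
  shows "z \<le> y"
proof (rule ccontr)
  assume "\<not> z \<le> y"
  moreover have "1 / real p < y" using one_over_less_self[OF p] y by simp
  ultimately have "growth_poly p z < 0" using growth_poly_sign(2)[OF p _ y(2)] by simp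
  with z show False by simp
qed

lemma algebraic_growth_poly_root:
  assumes "p \<ge> 3" and "growth_poly p y = 0"
  shows "algebraic y"
proof -
  define P :: "real poly" where "P = monom (real p ^ p) (p - 2) - [:-1, real p:] ^ (p - 1)"
  have eval: "poly P z = growth_poly p z" for z
    by (simp add: P_def growth_poly_def poly_monom algebra_simps)
  have int_mult: "\<forall>i. coeff (q * r) i \<in> \<int>" if "\<forall>i. coeff q i \<in> \<int>" "\<forall>i. coeff r i \<in> \<int>"
    for q r :: "real poly"
    using that by (auto simp: coeff_mult intro!: Ints_sum Ints_mult)
  have "\<forall>i. coeff ([:-1, real p:] ^ n) i \<in> \<int>" for n
  proof (induction n)
    case (Suc n)
    have "\<forall>i. coeff [:-1, real p:] i \<in> \<int>" by (auto simp: coeff_pCons split: nat.split)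
    from int_mult[OF this Suc.IH] show ?case by simp
  qed (simp add: coeff_1)
  then have "\<forall>i. coeff P i \<in> \<int>" by (auto simp: P_def coeff_monom intro!: Ints_diff)
  moreover have "P \<noteq> 0" using eval[of "real p"] growth_poly_pos_at_p[OF assms(1)] by auto
  ultimately show ?thesis using eval[of y] assms(2) by (intro algebraicI) auto
qed

section \<open>The branch recursions on either side of the critical point\<close>

lemma branch_gf_ge_1: "x \<ge> 0 \<Longrightarrow> branch_gf p x m \<ge> 1"
  by (induction m) (auto intro!: one_le_power simp: zero_le_mult_iff)

lemma incseq_branch_gf: "x \<ge> 0 \<Longrightarrow> incseq (branch_gf p x)"
proof (rule incseq_SucI)
  fix m assume x: "x \<ge> 0"
  show "branch_gf p x m \<le> branch_gf p x (Suc m)"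
  proof (induction m)
    case (Suc m)
    have "1 + x * branch_gf p x m \<le> 1 + x * branch_gf p x (Suc m)"
      using Suc x by (simp add: mult_left_mono)
    moreover have "0 \<le> 1 + x * branch_gf p x m" using branch_gf_ge_1[OF x, of p m] x by simp
    ultimately show ?case by (simp add: power_mono)
  qed (simp add: one_le_power x)
qed

lemma marked_branch_gf_nonneg: "x \<ge> 0 \<Longrightarrow> s \<ge> 0 \<Longrightarrow> marked_branch_gf p x s m \<ge> 0"
proof (induction m)
  case (Suc m)
  have "branch_gf p x (Suc m) \<ge> 1" by (rule branch_gf_ge_1[OF Suc.prems(1)])
  moreover have "0 \<le> 1 + x * branch_gf p x m" using branch_gf_ge_1[OF Suc.prems(1), of p m] Suc.prems by simp
  ultimately show ?case using Suc by simp
qed simp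

lemma marked_branch_gf_Suc_power:
  assumes "t > 0"
  shows "marked_branch_gf p (t^2) (1/t) (Suc m) = branch_gf p (t^2) (Suc m)
    + (real p * t * (1 + t^2 * branch_gf p (t^2) m) ^ (p - 1)) * marked_branch_gf p (t^2) (1/t) m"
  using assms by (simp add: power2_eq_square field_simps)

text \<open>At the root y of the growth polynomial, U = p y / (p y - 1) is a fixpoint of
  u \<mapsto> 1 + u^p / y^2 at which the multiplier p U^(p-1) / y equals 1.\<close>

lemma critical_fixpoint:
  assumes p: "p \<ge> 3" and y: "y > real p" "growth_poly p y = 0"
  defines "U \<equiv> real p * y / (real p * y - 1)"
  shows "U \<ge> 1" "U ^ (p - 1) = y / real p" "1 + U ^ p / y ^ 2 = U"
proof -
  obtain k where k: "p = Suc (Suc (Suc k))" "p - 1 = Suc (Suc k)" "p - 2 = Suc k"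
    using ge_3_exponents[OF p] by metis
  have pp: "real p \<ge> 3" using p by simp
  have y0: "y > 0" using y pp by simp
  have "1 * 1 < real p * y" using pp y by (intro mult_le_less_imp_less) auto
  then have py: "real p * y > 1" by simp
  show "U \<ge> 1" using py by (simp add: U_def field_simps)
  have root: "(real p * y - 1) ^ (p - 1) = real p ^ p * y ^ (p - 2)"
    using y(2) by (simp add: growth_poly_def)
  have "U ^ (p - 1) = (real p * y) ^ (p - 1) / (real p * y - 1) ^ (p - 1)"
    by (simp add: U_def power_divide)
  also have "\<dots> = (real p ^ (p - 1) * y ^ (p - 1)) / (real p ^ p * y ^ (p - 2))"
    unfolding root power_mult_distrib ..
  also have "real p ^ p = real p ^ (p - 1) * real p" using k by (metis power_Suc2)
  also have "y ^ (p - 1) = y ^ (p - 2) * y" using k by simp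
  finally show U1: "U ^ (p - 1) = y / real p" using y0 pp by (simp add: field_simps)
  have "U ^ p = U * (y / real p)" using k U1 by (metis power_Suc)
  then show "1 + U ^ p / y ^ 2 = U" using py y0 pp by (simp add: U_def field_simps power2_eq_square)
qed

lemma branch_gf_below_fixpoint:
  assumes p: "p \<ge> 3" and y: "y > real p" "growth_poly p y = 0" and t: "t > 0" "t * y < 1"
  defines "U \<equiv> real p * y / (real p * y - 1)"
  shows "1 + t^2 * branch_gf p (t^2) m \<le> U" and "branch_gf p (t^2) m \<le> U ^ p"
proof -
  note U = critical_fixpoint[OF p y, folded U_def]
  have "t \<le> 1 / y" using t y p by (simp add: field_simps)
  then have x_le: "t^2 \<le> 1 / y^2" using t by (metis power_mono less_imp_le power_one_over)
  have step: "1 + t^2 * branch_gf p (t^2) m \<le> U" for m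
  proof (induction m)
    case 0
    have "1 / y^2 \<le> U ^ p / y^2" using U(1) by (simp add: divide_right_mono)
    then show ?case using U(3) x_le by simp
  next
    case (Suc m)
    have "branch_gf p (t^2) (Suc m) \<le> U ^ p"
      using Suc branch_gf_ge_1[of "t^2" p m] by (simp add: power_mono)
    then have "t^2 * branch_gf p (t^2) (Suc m) \<le> (1 / y^2) * U ^ p"
      using x_le branch_gf_ge_1[of "t^2" p "Suc m"] by (intro mult_mono) auto
    then show ?case using U(3) by simp
  qed
  then show "1 + t^2 * branch_gf p (t^2) m \<le> U" .
  show "branch_gf p (t^2) m \<le> U ^ p"
  proof (cases m)
    case (Suc m')
    then show ?thesis using step[of m'] branch_gf_ge_1[of "t^2" p m'] by (simp add: power_mono)
  qed (use U(1) in simp)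
qed

lemma marked_branch_gf_bounded:
  assumes p: "p \<ge> 3" and y: "y > real p" "growth_poly p y = 0" and t: "t > 0" "t * y < 1"
  defines "U \<equiv> real p * y / (real p * y - 1)"
  shows "marked_branch_gf p (t^2) (1/t) m \<le> U ^ p / (1 - t * y)"
proof (induction m)
  case 0
  have "1 \<le> U ^ p" using critical_fixpoint(1)[OF p y] by (simp add: U_def)
  moreover have "U ^ p \<le> U ^ p / (1 - t * y)" using calculation t y p by (simp add: field_simps)
  ultimately show ?case by simp
next
  case (Suc m)
  let ?a = "branch_gf p (t^2) m" and ?b = "marked_branch_gf p (t^2) (1/t) m"
  note a_bounds = branch_gf_below_fixpoint[OF p y t, folded U_def]
  have "(1 + t^2 * ?a) ^ (p - 1) \<le> U ^ (p - 1)"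
    using a_bounds(1)[of m] branch_gf_ge_1[of "t^2" p m] by (simp add: power_mono)
  moreover have "?b \<ge> 0" using marked_branch_gf_nonneg t by simp
  ultimately have "(real p * t * (1 + t^2 * ?a) ^ (p - 1)) * ?b \<le> (real p * t * U ^ (p - 1)) * ?b"
    using t by (intro mult_right_mono mult_left_mono) auto
  also have "\<dots> = (t * y) * ?b" using critical_fixpoint(2)[OF p y] p by (simp add: U_def)
  also have "\<dots> \<le> (t * y) * (U ^ p / (1 - t * y))"
    using Suc.IH t y p by (intro mult_left_mono) auto
  finally have "marked_branch_gf p (t^2) (1/t) (Suc m) \<le> U ^ p + (t * y) * (U ^ p / (1 - t * y))"
    using marked_branch_gf_Suc_power[OF t(1)] a_bounds(2)[of "Suc m"] by simp
  also have "\<dots> = U ^ p / (1 - t * y)" using t by (simp add: field_simps)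
  finally show ?case .
qed

lemma mult_power_diff_le:
  fixes s c :: real
  assumes s: "0 < s" "s \<le> 1" and c: "c \<ge> real k + 1" "c > 1"
  shows "s * (c - s) ^ k \<le> (c - 1) ^ k"
proof -
  have cs: "c - s > 0" using s c by simp
  define w where "w = (1 - s) / (c - s)"
  have w1: "w \<le> 1" using s cs c by (simp add: w_def field_simps)
  have c1: "c - 1 = (c - s) * (1 + (- w))" using cs by (simp add: w_def field_simps)
  have "s * (c - s) \<le> (c - s) - real k * (1 - s)"
    using mult_nonneg_nonneg[of "1 - s" "c - s - real k"] s c by (simp add: algebra_simps)
  then have "s \<le> 1 + real k * (- w)" using cs by (simp add: w_def field_simps)
  also have "\<dots> \<le> (1 + (- w)) ^ k" using w1 by (intro Bernoulli_inequality) simp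
  finally have "(c - s) ^ k * s \<le> (c - s) ^ k * (1 + (- w)) ^ k"
    using cs by (intro mult_left_mono) auto
  then show ?thesis unfolding c1 power_mult_distrib by (simp add: mult.commute)
qed

text \<open>When growth_poly p z > 0, every fixpoint u = 1 + u^p / z^2 is repelling for the marked
  recursion: if its multiplier s = p u^(p-1) / z were at most 1, eliminating u would give
  p^p z^(p-2) = s (p z - s)^(p-1) \<le> (p z - 1)^(p-1), i.e. growth_poly p z \<le> 0.\<close>

lemma fixpoint_multiplier_gt_1:
  assumes p: "p \<ge> 3" and z: "z \<ge> real p" and fz: "growth_poly p z > 0"
    and u: "u > 0" "u = 1 + u ^ p / z ^ 2"
  shows "real p * u ^ (p - 1) / z > 1"
proof (rule ccontr)
  obtain k where k: "p = Suc (Suc (Suc k))" "p - 1 = Suc (Suc k)" "p - 2 = Suc k"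
    using ge_3_exponents[OF p] by metis
  define s where "s = real p * u ^ (p - 1) / z"
  assume "\<not> real p * u ^ (p - 1) / z > 1"
  then have s1: "s \<le> 1" by (simp add: s_def)
  have pp: "real p \<ge> 3" using p by simp
  have z0: "z > 0" using z pp by simp
  have s0: "s > 0" using u z0 pp by (simp add: s_def)
  have up1: "u ^ (p - 1) = s * z / real p" using z0 pp by (simp add: s_def)
  have "u ^ p = u * (s * z / real p)" using up1 k by (metis power_Suc)
  then have "u = 1 + u * (s * z / real p) / z ^ 2" using u(2) by simp
  then have "u = 1 + u * s / (real p * z)" using z0 pp by (simp add: field_simps power2_eq_square)
  then have "u * (real p * z - s) = real p * z" using z0 pp by (simp add: field_simps)
  then have "(u * (real p * z - s)) ^ (p - 1) = (real p * z) ^ (p - 1)" by simp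
  then have eq: "(s * z / real p) * (real p * z - s) ^ (p - 1) = real p ^ (p - 1) * z ^ (p - 1)"
    unfolding power_mult_distrib up1 .
  have "s * (real p * z - s) ^ (p - 1) =
      ((s * z / real p) * (real p * z - s) ^ (p - 1)) * (real p / z)"
    using z0 pp by (simp add: field_simps)
  also have "\<dots> = (real p ^ (p - 1) * real p) * (z ^ (p - 1) / z)"
    unfolding eq by (simp add: field_simps)
  also have "real p ^ (p - 1) * real p = real p ^ p" using k by (metis power_Suc2)
  also have "z ^ (p - 1) / z = z ^ (p - 2)" using z0 k by simp
  finally have key: "s * (real p * z - s) ^ (p - 1) = real p ^ p * z ^ (p - 2)" .
  have "real p * z \<ge> real p * 1" using z pp by (intro mult_left_mono) auto
  then have "real p * z > 1" "real p * z \<ge> real (p - 1) + 1"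
    using pp p by (linarith, simp add: of_nat_diff)
  then have "s * (real p * z - s) ^ (p - 1) \<le> (real p * z - 1) ^ (p - 1)"
    by (intro mult_power_diff_le[OF s0 s1])
  then have "growth_poly p z \<le> 0" unfolding growth_poly_def key by simp
  with fz show False by simp
qed

lemma branch_gf_fixpoint:
  assumes x: "x > 0" and bdd: "bdd_above (range (branch_gf p x))"
  obtains L where "branch_gf p x \<longlonglongrightarrow> L" "(1 + x * L) ^ p = L" "L \<ge> 1"
proof -
  have inc: "incseq (branch_gf p x)" using incseq_branch_gf x by simp
  define L where "L = (SUP m. branch_gf p x m)"
  have lim: "branch_gf p x \<longlonglongrightarrow> L" unfolding L_def by (rule LIMSEQ_incseq_SUP[OF bdd inc])
  have "(\<lambda>m. (1 + x * branch_gf p x m) ^ p) \<longlonglongrightarrow> (1 + x * L) ^ p"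
    by (intro tendsto_intros lim)
  then have "(\<lambda>m. branch_gf p x (Suc m)) \<longlonglongrightarrow> (1 + x * L) ^ p" by simp
  then have "(1 + x * L) ^ p = L" by (rule LIMSEQ_unique[OF _ LIMSEQ_Suc[OF lim]])
  moreover have "L \<ge> 1" using incseq_le[OF inc lim, of 0] by simp
  ultimately show thesis using lim by (rule that[rotated])
qed

lemma not_bdd_above_if_eventually_Suc_ge:
  fixes f :: "nat \<Rightarrow> real"
  assumes "\<And>m. m \<ge> m0 \<Longrightarrow> f (Suc m) \<ge> 1 + f m" and "\<And>m. f m \<ge> 0"
  shows "\<not> bdd_above (range f)"
proof
  assume "bdd_above (range f)"
  then obtain B where B: "\<And>m. f m \<le> B" by (auto simp: bdd_above_def)
  have grow: "f (m0 + n) \<ge> real n" for n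
  proof (induction n)
    case (Suc n)
    then show ?case using assms(1)[of "m0 + n"] by simp
  qed (simp add: assms(2))
  have "f (m0 + (nat \<lceil>B\<rceil> + 1)) > B"
    using grow[of "nat \<lceil>B\<rceil> + 1"] real_nat_ceiling_ge[of B] by simp
  with B show False by (simp add: not_le[symmetric])
qed

lemma branch_gf_le_marked_branch_gf:
  assumes "x \<ge> 0" "s \<ge> 0"
  shows "branch_gf p x m \<le> marked_branch_gf p x s m"
proof (cases m)
  case (Suc m')
  have "0 \<le> 1 + x * branch_gf p x m'" using branch_gf_ge_1[of x p m'] assms by simp
  then show ?thesis
    using Suc assms marked_branch_gf_nonneg[OF assms, of p m'] by (simp add: add_increasing2)
qed simp

lemma branch_multiplier_eventually_gt_1:
  assumes p: "p \<ge> 3" and y: "real p < y" "growth_poly p y = 0"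
    and t: "1 / y < t" "t \<le> 1 / real p" and bdd: "bdd_above (range (branch_gf p (t^2)))"
  shows "\<forall>\<^sub>F m in sequentially. 1 < real p * t * (1 + t^2 * branch_gf p (t^2) m) ^ (p - 1)"
proof -
  have "y > 0" using y p by simp
  then have t0: "t > 0" using t(1) by (meson divide_pos_pos less_trans zero_less_one)
  then have "t^2 > 0" by simp
  then obtain L where lim: "branch_gf p (t^2) \<longlonglongrightarrow> L" and L: "(1 + t^2 * L) ^ p = L" "L \<ge> 1"
    using branch_gf_fixpoint bdd by blast
  define z where "z = 1 / t"
  define u where "u = 1 + t^2 * L"
  have z: "z \<ge> real p" "z < y" "t = 1 / z"
    using t t0 \<open>y > 0\<close> p by (auto simp: z_def field_simps)
  have "u > 0" using L t0 by (simp add: u_def add_pos_nonneg)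
  moreover have "u = 1 + u ^ p / z ^ 2" using L z(3) unfolding u_def by (simp add: power_divide)
  moreover have "growth_poly p z > 0"
    using growth_poly_sign(1)[OF p _ y(2)] z one_over_less_self[OF p] by simp
  ultimately have "real p * t * u ^ (p - 1) > 1"
    using fixpoint_multiplier_gt_1[OF p z(1)] by (simp add: z_def mult_ac)
  moreover have "(\<lambda>m. real p * t * (1 + t^2 * branch_gf p (t^2) m) ^ (p - 1))
      \<longlonglongrightarrow> real p * t * u ^ (p - 1)"
    unfolding u_def by (intro tendsto_intros lim)
  ultimately show ?thesis by (rule order_tendstoD(1)[rotated])
qed

theorem marked_branch_gf_unbounded:
  assumes p: "p \<ge> 3" and y: "real p < y" "growth_poly p y = 0"
    and t: "1 / y < t" "t \<le> 1 / real p"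
  shows "\<not> bdd_above (range (marked_branch_gf p (t^2) (1/t)))"
proof
  let ?a = "branch_gf p (t^2)" and ?b = "marked_branch_gf p (t^2) (1/t)"
  assume bdd: "bdd_above (range ?b)"
  have "y > 0" using y p by simp
  then have t0: "t > 0" using t(1) by (meson divide_pos_pos less_trans zero_less_one)
  have b0: "?b m \<ge> 0" for m using marked_branch_gf_nonneg t0 by simp
  obtain B where B: "?b m \<le> B" for m using bdd by (auto simp: bdd_above_def)
  have "?a m \<le> B" for m
    using branch_gf_le_marked_branch_gf[of "t^2" "1/t" p m] t0 B[of m] by simp
  then have "bdd_above (range ?a)" by (rule bdd_aboveI2)
  then obtain m0 where m0: "\<And>m. m \<ge> m0 \<Longrightarrow> 1 < real p * t * (1 + t^2 * ?a m) ^ (p - 1)"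
    using branch_multiplier_eventually_gt_1[OF p y t] by (auto simp: eventually_sequentially)
  have "?b (Suc m) \<ge> 1 + ?b m" if "m \<ge> m0" for m
  proof -
    have "?b m \<le> (real p * t * (1 + t^2 * ?a m) ^ (p - 1)) * ?b m"
      using m0[OF that] b0[of m] by (simp add: mult_le_cancel_right1)
    then show ?thesis
      using marked_branch_gf_Suc_power[OF t0, of p m] branch_gf_ge_1[of "t^2" p "Suc m"] by simp
  qed
  with b0 have "\<not> bdd_above (range ?b)" by (intro not_bdd_above_if_eventually_Suc_ge)
  with bdd show False by simp
qed

section \<open>The radius of convergence of the sphere series\<close>

lemma marked_tree_gf_root_power:
  fixes m :: nat
  assumes fD: "finite D" and invD: "letter_inv ` D \<subseteq> D" and cD: "card D = Suc p" and "t > 0"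
  defines "u \<equiv> 1 + t^2 * branch_gf p (t^2) m" and "b \<equiv> marked_branch_gf p (t^2) (1/t) m"
  shows "marked_tree_gf D (Suc m) [] (t^2) (1/t) = u ^ Suc p + real (Suc p) * t * b * u ^ p"
proof -
  have "1 / t * (real (Suc p) * (t^2 * b * u ^ p)) = real (Suc p) * t * b * u ^ p"
    using \<open>t > 0\<close> by (simp add: power2_eq_square)
  then show ?thesis
    using marked_tree_gf_root[OF fD invD, of m "t^2" "1/t"] cD by (simp add: u_def b_def)
qed

lemma marked_tree_gf_root_bounded:
  assumes fD: "finite D" and invD: "letter_inv ` D \<subseteq> D" and cD: "card D = Suc p"
    and p: "p \<ge> 3" and y: "real p < y" "growth_poly p y = 0" and t: "t > 0" "t * y < 1"
  obtains G where "\<And>M. marked_tree_gf D M [] (t^2) (1/t) \<le> G"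
proof -
  define U where "U = real p * y / (real p * y - 1)"
  define B where "B = U ^ p / (1 - t * y)"
  note a_bound = branch_gf_below_fixpoint(1)[OF p y t, folded U_def]
  note b_bound = marked_branch_gf_bounded[OF p y t, folded U_def B_def]
  have "marked_tree_gf D M [] (t^2) (1/t) \<le> max 1 (U ^ Suc p + real (Suc p) * t * B * U ^ p)" for M
  proof (cases M)
    case 0
    then show ?thesis by (simp add: marked_tree_gf_0)
  next
    case (Suc m)
    let ?u = "1 + t^2 * branch_gf p (t^2) m" and ?b = "marked_branch_gf p (t^2) (1/t) m"
    have u: "1 \<le> ?u" "?u \<le> U" using a_bound branch_gf_ge_1[of "t^2" p m] by simp_all
    have "marked_tree_gf D M [] (t^2) (1/t) = ?u ^ Suc p + real (Suc p) * t * ?b * ?u ^ p"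
      using marked_tree_gf_root_power[OF fD invD cD t(1)] Suc by simp
    also have "\<dots> \<le> U ^ Suc p + real (Suc p) * t * B * U ^ p"
      using u b_bound[of m] marked_branch_gf_nonneg[of "t^2" "1/t" p m] t
      by (intro add_mono mult_mono power_mono) auto
    finally show ?thesis by simp
  qed
  then show thesis by (rule that)
qed

lemma marked_tree_gf_root_unbounded:
  assumes fD: "finite D" and invD: "letter_inv ` D \<subseteq> D" and cD: "card D = Suc p"
    and p: "p \<ge> 3" and y: "real p < y" "growth_poly p y = 0"
    and t: "1 / y < t" "t \<le> 1 / real p"
  shows "\<not> bdd_above (range (\<lambda>M. marked_tree_gf D M [] (t^2) (1/t)))"
proof
  assume "bdd_above (range (\<lambda>M. marked_tree_gf D M [] (t^2) (1/t)))"
  then obtain B where B: "\<And>M. marked_tree_gf D M [] (t^2) (1/t) \<le> B" by (auto simp: bdd_above_def)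
  have "y > 0" using y p by simp
  then have t0: "t > 0" using t(1) by (meson divide_pos_pos less_trans zero_less_one)
  have "marked_branch_gf p (t^2) (1/t) m \<le> B / t" for m
  proof -
    let ?u = "1 + t^2 * branch_gf p (t^2) m" and ?b = "marked_branch_gf p (t^2) (1/t) m"
    have u: "1 \<le> ?u" using branch_gf_ge_1[of "t^2" p m] by simp
    have "1 * 1 \<le> real (Suc p) * ?u ^ p" using u by (intro mult_mono one_le_power) auto
    moreover have "t * ?b \<ge> 0" using marked_branch_gf_nonneg t0 by simp
    ultimately have "t * ?b * 1 \<le> t * ?b * (real (Suc p) * ?u ^ p)" by (intro mult_left_mono) auto
    moreover have "0 \<le> ?u ^ Suc p" using u by simp
    ultimately have "t * ?b \<le> ?u ^ Suc p + real (Suc p) * t * ?b * ?u ^ p" by (simp add: mult_ac)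
    also have "\<dots> = marked_tree_gf D (Suc m) [] (t^2) (1/t)"
      using marked_tree_gf_root_power[OF fD invD cD t0] by simp
    also have "\<dots> \<le> B" by (rule B)
    finally show ?thesis using t0 by (simp add: field_simps)
  qed
  then have "bdd_above (range (marked_branch_gf p (t^2) (1/t)))" by (rule bdd_aboveI2)
  with marked_branch_gf_unbounded[OF p y t] show False by simp
qed

lemma conv_radius_eqI_bounded:
  fixes c :: "nat \<Rightarrow> real"
  assumes nonneg: "\<And>n. c n \<ge> 0" and "R > 0" and "b > R"
    and bounded: "\<And>t. 0 < t \<Longrightarrow> t < R \<Longrightarrow> \<exists>G. \<forall>n. c n * t ^ n \<le> G"
    and divergent: "\<And>t. R < t \<Longrightarrow> t \<le> b \<Longrightarrow> \<not> summable (\<lambda>n. c n * t ^ n)"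
  shows "conv_radius c = ereal R"
proof (rule conv_radius_eqI')
  fix r :: real assume r: "0 < r" "ereal r < ereal R"
  define t where "t = (r + R) / 2"
  have t: "0 < t" "t < R" "r < t" using r by (auto simp: t_def)
  obtain G where G: "\<And>n. c n * t ^ n \<le> G" using bounded[OF t(1,2)] by blast
  have geometric: "summable (\<lambda>n. G * (r / t) ^ n)"
    using r t by (intro summable_mult summable_geometric) simp
  have "norm (c n * r ^ n) \<le> G * (r / t) ^ n" for n
  proof -
    have "norm (c n * r ^ n) = (c n * t ^ n) * (r / t) ^ n"
      using r t nonneg[of n] by (simp add: power_divide abs_mult)
    also have "\<dots> \<le> G * (r / t) ^ n" using G[of n] r t by (intro mult_right_mono) auto
    finally show ?thesis .
  qed
  then show "summable (\<lambda>n. c n * of_real r ^ n)"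
    by (intro summable_comparison_test'[OF geometric, where N = 0]) simp
next
  fix r :: real assume r: "0 < r" "ereal r > ereal R"
  define r' where "r' = min r b"
  have r': "R < r'" "r' \<le> b" "0 < r'" using r \<open>b > R\<close> \<open>R > 0\<close> by (auto simp: r'_def)
  show "\<not> summable (\<lambda>n. norm (c n * of_real r ^ n))"
  proof
    assume "summable (\<lambda>n. norm (c n * of_real r ^ n))"
    moreover have "norm (c n * r' ^ n) \<le> norm (c n * r ^ n)" for n
      using r' nonneg[of n] by (auto simp: r'_def abs_mult intro!: mult_left_mono power_mono)
    ultimately have "summable (\<lambda>n. c n * r' ^ n)"
      by (simp add: summable_comparison_test'[where N = 0])
    with divergent[OF r'(1,2)] show False by simp
  qed
qed (use \<open>R > 0\<close> in simp)

lemma limsup_root_eq_inverse_conv_radius: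
  fixes c :: "nat \<Rightarrow> 'a :: banach"
  assumes "conv_radius c = ereal R" and "R > 0"
  shows "limsup (\<lambda>n. ereal (root n (norm (c n)))) = ereal (1 / R)"
proof -
  define l where "l = limsup (\<lambda>n. ereal (root n (norm (c n))))"
  have "0 = limsup (\<lambda>n. 0::ereal)" by (simp add: Limsup_const)
  also have "\<dots> \<le> l" unfolding l_def by (intro Limsup_mono) (simp_all add: real_root_ge_zero)
  finally have "l \<ge> 0" .
  moreover have "inverse l = ereal R" using assms(1) by (simp add: conv_radius_def l_def)
  ultimately show ?thesis
    using assms(2) by (cases l) (auto simp: l_def field_simps split: if_splits)
qed

lemma card_marked_trees_power_bounded:
  assumes fD: "finite D" and "letter_inv ` D \<subseteq> D" and "card D = Suc p"
    and p: "p \<ge> 3" and y: "real p < y" "growth_poly p y = 0" and t: "t > 0" "t * y < 1"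
  shows "\<exists>G. \<forall>K. real (card (marked_trees D K)) * t ^ K \<le> G"
proof -
  obtain G where "\<And>M. marked_tree_gf D M [] (t^2) (1/t) \<le> G"
    using marked_tree_gf_root_bounded[OF assms] by blast
  with card_marked_trees_le_gf[OF fD t(1)] show ?thesis by (blast intro: order_trans)
qed

lemma card_marked_trees_not_summable:
  assumes fD: "finite D" and "letter_inv ` D \<subseteq> D" and "card D = Suc p"
    and p: "p \<ge> 3" and y: "real p < y" "growth_poly p y = 0"
    and t: "1 / y < t" "t \<le> 1 / real p"
  shows "\<not> summable (\<lambda>K. real (card (marked_trees D K)) * t ^ K)"
proof
  assume sum: "summable (\<lambda>K. real (card (marked_trees D K)) * t ^ K)"
  have "y > 0" using y p by simp
  then have t0: "t > 0" using t(1) by (meson divide_pos_pos less_trans zero_less_one)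
  have "marked_tree_gf D M [] (t^2) (1/t) \<le> (\<Sum>K. real (card (marked_trees D K)) * t ^ K)" for M
  proof -
    obtain L where "marked_tree_gf D M [] (t^2) (1/t) \<le> (\<Sum>K\<le>L. real (card (marked_trees D K)) * t ^ K)"
      using gf_le_sum_card_marked_trees[OF fD t0] by blast
    also have "\<dots> \<le> (\<Sum>K. real (card (marked_trees D K)) * t ^ K)"
      using t0 by (intro sum_le_suminf[OF sum]) auto
    finally show ?thesis .
  qed
  then have "bdd_above (range (\<lambda>M. marked_tree_gf D M [] (t^2) (1/t)))" by (rule bdd_aboveI2)
  with marked_tree_gf_root_unbounded[OF assms] show False by simp
qed

lemma conv_radius_card_marked_trees:
  assumes "finite D" and "letter_inv ` D \<subseteq> D" and "card D = Suc p"
    and p: "p \<ge> 3" and y: "real p < y" "growth_poly p y = 0"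
  shows "conv_radius (\<lambda>K. real (card (marked_trees D K))) = ereal (1 / y)"
proof (rule conv_radius_eqI_bounded)
  have "y > 0" using y p by simp
  then show "1 / y > 0" by simp
  show "1 / y < 1 / real p" using y p by (simp add: frac_less2)
  show "\<exists>G. \<forall>n. real (card (marked_trees D n)) * t ^ n \<le> G" if "0 < t" "t < 1 / y" for t
    using that \<open>y > 0\<close> card_marked_trees_power_bounded[OF assms, of t] by (simp add: field_simps)
qed (use card_marked_trees_not_summable[OF assms] in simp_all)

lemma fim_growth_rate_conv_root:
  "fim_growth_rate X = limsup (\<lambda>n. ereal (root n (norm (real (card (fim_sphere X n))))))"
  unfolding fim_growth_rate_def
proof (rule Limsup_eq)
  have "real (card (fim_sphere X n)) powr (1 / real n) = root n (norm (real (card (fim_sphere X n))))"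
    if "n \<ge> 1" for n
    using that root_powr_inverse[of n "real (card (fim_sphere X n))"] by simp
  then show "\<forall>\<^sub>F n in sequentially. ereal (real (card (fim_sphere X n)) powr (1 / real n)) =
      ereal (root n (norm (real (card (fim_sphere X n)))))"
    unfolding eventually_sequentially by auto
qed

theorem fim_growth_rate_eq_root:
  assumes "finite X" and "card X \<ge> 2"
  defines "p \<equiv> 2 * card X - 1"
  assumes y: "real p < y" "growth_poly p y = 0"
  shows "fim_growth_rate X = ereal y"
proof -
  have p: "p \<ge> 3" using assms(2) by (simp add: p_def)
  have fin: "finite (X \<times> (UNIV :: bool set))" and card: "card (X \<times> (UNIV :: bool set)) = Suc p"
    using assms(1,2) by (simp_all add: card_cartesian_product p_def)
  from conv_radius_card_marked_trees[OF fin letter_inv_alphabet card p y]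
  have "conv_radius (\<lambda>K. real (card (fim_sphere X K))) = ereal (1 / y)"
    by (simp add: card_fim_sphere)
  from limsup_root_eq_inverse_conv_radius[OF this] y p show ?thesis
    by (simp add: fim_growth_rate_conv_root)
qed

theorem mainTheorem11:
  fixes X :: "'a set"
  assumes "finite X" and "card X \<ge> 2"
  shows "let p = 2 * card X - 1 in
    \<exists>y::real. fim_growth_rate X = ereal y
      \<and> real p ^ p * y ^ (p - 2) - (real p * y - 1) ^ (p - 1) = 0
      \<and> (\<forall>z::real. real p ^ p * z ^ (p - 2) - (real p * z - 1) ^ (p - 1) = 0 \<longrightarrow> z \<le> y)
      \<and> real p < y \<and> y < real p + 1
      \<and> algebraic y"
proof -
  define p where "p = 2 * card X - 1"
  have p: "p \<ge> 3" using assms(2) by (simp add: p_def)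
  obtain y where y: "real p < y" "y < real p + 1" "growth_poly p y = 0"
    using growth_poly_root_exists[OF p] by blast
  have "fim_growth_rate X = ereal y"
    using fim_growth_rate_eq_root[OF assms] y by (simp add: p_def)
  moreover have "\<forall>z. growth_poly p z = 0 \<longrightarrow> z \<le> y"
    using growth_poly_root_le[OF p y(1,3)] by blast
  moreover have "algebraic y" using algebraic_growth_poly_root[OF p y(3)] .
  ultimately show ?thesis using y unfolding Let_def p_def[symmetric] growth_poly_def by blast
qed

end
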